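(* Let $H$ be a finite horizon (possibly with mass at zero) with $\mu:=\mathbb{E}H<\infty$, and let $m:=\sup\operatorname{supp}(H)\in\mathbb{N}\cup\{\infty\}$. Then: (a) $\mathcal{V}(\mathbf{Y})=\mathcal{V}(\mathbf{Z})$; (b) there exists $\bar\zeta\in\mathcal{T}$ such that $\mathbb{E}Z_{\bar\zeta}=\mathcal{V}(\mathbf{Z})$; (c) $\bar\tau:=\bar\zeta\wedge(H+1)$ satisfies $\mathbb{E}Y_{\bar\tau}=\mathcal{V}(\mathbf{Y})$. Moreover, $\bar\zeta$ can be taken to be the backward induction stopping rule for $Z_0,Z_1,\dots,Z_m$ if $m<\infty$, and the Snell rule for $\mathbf{Z}$ if $m=\infty$.
   Context: $X$ is a nonnegative integrable random variable, $X_1,X_2,\dots$ i.i.d. copies, and $X_0:=0$. $H$ is a random variable with values in $\{0,1,2,\dots\}$, $\mathbb{P}(H<\infty)=1$, independent of the $X_i$; $S(i):=\mathbb{P}(H\ge i)$. Reward sequence $\mathbf{Y}$: $Y_0:=X_0$, $Y_i:=X_i\mathbb{1}_{\{H\ge i\}}$ for $i\in\mathbb{N}$, $Y_\infty:=\limsup_i Y_i=0$; filtration $\mathcal{F}_0$ trivial, $\mathcal{F}_i=\sigma(\mathbb{1}_{\{H=0\}},X_1,\dots,\mathbb{1}_{\{H=i-1\}},X_i)$, $\mathcal{F}_\infty=\sigma(\bigcup_i\mathcal{F}_i)$. $\mathcal{T}^*$ is the class of stopping times for $(\mathcal{F}_i)$ with values in $\{0,1,\dots\}\cup\{\infty\}$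 (possibly infinite with positive probability). Discounted problem $\mathbf{Z}$: $Z_0:=Y_0$, $Z_i:=S(i)X_i$ for $i\in\mathbb{N}$, $Z_\infty:=\limsup_iZ_i=0$; filtration $\mathcal{B}_0$ trivial, $\mathcal{B}_i=\sigma(X_1,\dots,X_i)$, $\mathcal{B}_\infty=\sigma(\bigcup_i\mathcal{B}_i)$; $\mathcal{T}$ is the class of possibly infinite stopping times for $(\mathcal{B}_i)$, and $\mathcal{T}_i\subseteq\mathcal{T}$ those with $\zeta\ge i$. Values: $\mathcal{V}(\mathbf{Y})=\sup_{\tau\in\mathcal{T}^*}\mathbb{E}Y_\tau$, $\mathcal{V}(\mathbf{Z})=\sup_{\zeta\in\mathcal{T}}\mathbb{E}Z_\zeta$. Backward induction rule for the finite sequence $Z_0,\dots,Z_m$: set $W_m=Z_m$, $W_i=\max(Z_i,\mathbb{E}[W_{i+1}\mid\mathcal{B}_i])$, and stop at the first $i\le m$ with $Z_i\ge\mathbb{E}[W_{i+1}\mid\mathcal{B}_i]$ (with stopping at $m$ otherwise). Snell envelope of $\mathbf{Z}$: $V_i=\operatorname{ess\,sup}_{\zeta\in\mathcal{T}_i}\mathbb{E}[Z_\zeta\mid\mathcal{B}_i]$; Snell rule: $\bar\zeta=\inf\{i\in\{0,1,\dots\}: Z_i\ge\mathbb{E}[V_{i+1}\mid\mathcal{B}_i]\}$. *)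

theory Defs
  imports "HOL-Probability.Probability" "HOL-Library.Extended_Nat"
begin

definition Surv :: "'a measure \<Rightarrow> ('a \<Rightarrow> nat) \<Rightarrow> nat \<Rightarrow> real" where
  "Surv M H i = measure M {\<omega> \<in> space M. H \<omega> \<ge> i}"

definition supp_sup :: "'a measure \<Rightarrow> ('a \<Rightarrow> nat) \<Rightarrow> enat" where
  "supp_sup M H = Sup (enat ` {n. measure M {\<omega> \<in> space M. H \<omega> = n} > 0})"

definition B_filt :: "'a measure \<Rightarrow> (nat \<Rightarrow> 'a \<Rightarrow> real) \<Rightarrow> enat \<Rightarrow> 'a measure" where
  "B_filt M X t = sigma (space M)
     {X j -` A \<inter> space M | j A. 1 \<le> j \<and> enat j \<le> t \<and> A \<in> sets borel}"

definition F_filt :: "'a measure \<Rightarrow> (nat \<Rightarrow> 'a \<Rightarrow> real) \<Rightarrow> ('a \<Rightarrow> nat) \<Rightarrow> enat \<Rightarrow> 'a measure" where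
  "F_filt M X H t = sigma (space M)
     ({X j -` A \<inter> space M | j A. 1 \<le> j \<and> enat j \<le> t \<and> A \<in> sets borel}
      \<union> {{\<omega> \<in> space M. H \<omega> = j - 1} | j. 1 \<le> j \<and> enat j \<le> t})"

definition Y_stop :: "(nat \<Rightarrow> 'a \<Rightarrow> real) \<Rightarrow> ('a \<Rightarrow> nat) \<Rightarrow> ('a \<Rightarrow> enat) \<Rightarrow> 'a \<Rightarrow> real" where
  "Y_stop X H \<tau> \<omega> = (case \<tau> \<omega> of enat i \<Rightarrow> (if i \<le> H \<omega> then X i \<omega> else 0) | \<infinity> \<Rightarrow> 0)"

definition Z_seq :: "'a measure \<Rightarrow> (nat \<Rightarrow> 'a \<Rightarrow> real) \<Rightarrow> ('a \<Rightarrow> nat) \<Rightarrow> nat \<Rightarrow> 'a \<Rightarrow> real" where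
  "Z_seq M X H i \<omega> = Surv M H i * X i \<omega>"

definition Z_stop :: "'a measure \<Rightarrow> (nat \<Rightarrow> 'a \<Rightarrow> real) \<Rightarrow> ('a \<Rightarrow> nat) \<Rightarrow> ('a \<Rightarrow> enat) \<Rightarrow> 'a \<Rightarrow> real" where
  "Z_stop M X H \<zeta> \<omega> = (case \<zeta> \<omega> of enat i \<Rightarrow> Z_seq M X H i \<omega> | \<infinity> \<Rightarrow> 0)"

definition T_star :: "'a measure \<Rightarrow> (nat \<Rightarrow> 'a \<Rightarrow> real) \<Rightarrow> ('a \<Rightarrow> nat) \<Rightarrow> ('a \<Rightarrow> enat) set" where
  "T_star M X H = {\<tau>. stopping_time (F_filt M X H) \<tau>}"

definition T_B :: "'a measure \<Rightarrow> (nat \<Rightarrow> 'a \<Rightarrow> real) \<Rightarrow> ('a \<Rightarrow> enat) set" where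
  "T_B M X = {\<zeta>. stopping_time (B_filt M X) \<zeta>}"

definition T_B_from :: "'a measure \<Rightarrow> (nat \<Rightarrow> 'a \<Rightarrow> real) \<Rightarrow> nat \<Rightarrow> ('a \<Rightarrow> enat) set" where
  "T_B_from M X i = {\<zeta> \<in> T_B M X. \<forall>\<omega>\<in>space M. \<zeta> \<omega> \<ge> enat i}"

definition V_Y :: "'a measure \<Rightarrow> (nat \<Rightarrow> 'a \<Rightarrow> real) \<Rightarrow> ('a \<Rightarrow> nat) \<Rightarrow> ennreal" where
  "V_Y M X H = (SUP \<tau> \<in> T_star M X H. \<integral>\<^sup>+ \<omega>. ennreal (Y_stop X H \<tau> \<omega>) \<partial>M)"

definition V_Z :: "'a measure \<Rightarrow> (nat \<Rightarrow> 'a \<Rightarrow> real) \<Rightarrow> ('a \<Rightarrow> nat) \<Rightarrow> ennreal" where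
  "V_Z M X H = (SUP \<zeta> \<in> T_B M X. \<integral>\<^sup>+ \<omega>. ennreal (Z_stop M X H \<zeta> \<omega>) \<partial>M)"

text \<open>Backward induction for Z_0,...,Z_m:  W_m = Z_m, W_i = max(Z_i, E[W_{i+1} | B_i]),
  computed via k = m - i.\<close>
fun BI_aux :: "'a measure \<Rightarrow> (nat \<Rightarrow> 'a \<Rightarrow> real) \<Rightarrow> ('a \<Rightarrow> nat) \<Rightarrow> nat \<Rightarrow> nat \<Rightarrow> 'a \<Rightarrow> ennreal" where
  "BI_aux M X H m 0 = (\<lambda>\<omega>. ennreal (Z_seq M X H m \<omega>))"
| "BI_aux M X H m (Suc k) = (\<lambda>\<omega>. max (ennreal (Z_seq M X H (m - Suc k) \<omega>))
      (nn_cond_exp M (B_filt M X (enat (m - Suc k))) (BI_aux M X H m k) \<omega>))"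

definition BI_W :: "'a measure \<Rightarrow> (nat \<Rightarrow> 'a \<Rightarrow> real) \<Rightarrow> ('a \<Rightarrow> nat) \<Rightarrow> nat \<Rightarrow> nat \<Rightarrow> 'a \<Rightarrow> ennreal" where
  "BI_W M X H m i = BI_aux M X H m (m - i)"

definition BI_rule :: "'a measure \<Rightarrow> (nat \<Rightarrow> 'a \<Rightarrow> real) \<Rightarrow> ('a \<Rightarrow> nat) \<Rightarrow> nat \<Rightarrow> 'a \<Rightarrow> enat" where
  "BI_rule M X H m \<omega> = enat (LEAST i. i = m \<or> (i < m \<and>
      ennreal (Z_seq M X H i \<omega>) \<ge> nn_cond_exp M (B_filt M X (enat i)) (BI_W M X H m (Suc i)) \<omega>))"

definition is_ess_sup :: "'a measure \<Rightarrow> ('a \<Rightarrow> ennreal) set \<Rightarrow> ('a \<Rightarrow> ennreal) \<Rightarrow> bool" where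
  "is_ess_sup M \<S> V \<longleftrightarrow> V \<in> borel_measurable M \<and> (\<forall>f\<in>\<S>. AE x in M. f x \<le> V x) \<and>
     (\<forall>g \<in> borel_measurable M. (\<forall>f\<in>\<S>. AE x in M. f x \<le> g x) \<longrightarrow> (AE x in M. V x \<le> g x))"

definition is_snell_envelope :: "'a measure \<Rightarrow> (nat \<Rightarrow> 'a \<Rightarrow> real) \<Rightarrow> ('a \<Rightarrow> nat) \<Rightarrow> (nat \<Rightarrow> 'a \<Rightarrow> ennreal) \<Rightarrow> bool" where
  "is_snell_envelope M X H V \<longleftrightarrow> (\<forall>i. is_ess_sup M
     ((\<lambda>\<zeta>. nn_cond_exp M (B_filt M X (enat i)) (\<lambda>\<omega>. ennreal (Z_stop M X H \<zeta> \<omega>))) ` T_B_from M X i)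
     (V i))"

definition snell_rule :: "'a measure \<Rightarrow> (nat \<Rightarrow> 'a \<Rightarrow> real) \<Rightarrow> ('a \<Rightarrow> nat) \<Rightarrow> (nat \<Rightarrow> 'a \<Rightarrow> ennreal) \<Rightarrow> 'a \<Rightarrow> enat" where
  "snell_rule M X H V \<omega> =
     (if \<exists>i. ennreal (Z_seq M X H i \<omega>) \<ge> nn_cond_exp M (B_filt M X (enat i)) (V (Suc i)) \<omega>
      then enat (LEAST i. ennreal (Z_seq M X H i \<omega>) \<ge> nn_cond_exp M (B_filt M X (enat i)) (V (Suc i)) \<omega>)
      else \<infinity>)"

end

theory Submission
  imports Defs
begin

(* Because H is independent of the X_i, on the event {H >= i} the sigma-algebra F_i carries no
   more information than B_i. Every F-stopping time therefore agrees, before the horizon, with a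
   B-stopping time zeta, and E Y_{min(zeta, H+1)} = sum_i E[X_i 1{zeta = i}] P(H >= i) = E Z_zeta;
   so the two problems have the same value.

   Since the Z_i are independent, the continuation values v_k = val k of the discounted problem
   are constants, with v_k = E max(Z_k, v_{k+1}); moreover v_k <= E X * sum_{i >= k} S(i) -> 0,
   as sum_i S(i) = mu + 1 < oo. The rule "stop at the first k with Z_k >= v_{k+1}" is optimal,
   and both the backward induction rule (for m < oo, where v_{m+1} = 0) and the Snell rule
   coincide with it almost surely. *)

lemma AE_le_if_set_nn_integral_le:
  fixes f g :: "'a \<Rightarrow> ennreal"
  assumes sub: "subalgebra M F"
    and [measurable]: "f \<in> borel_measurable F" "g \<in> borel_measurable F"
    and fin: "(\<integral>\<^sup>+x. g x \<partial>M) \<noteq> \<infinity>"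
    and le: "\<And>A. A \<in> sets F \<Longrightarrow> (\<integral>\<^sup>+x\<in>A. f x \<partial>M) \<le> (\<integral>\<^sup>+x\<in>A. g x \<partial>M)"
  shows "AE x in M. f x \<le> g x"
proof -
  have [measurable]: "f \<in> borel_measurable M" "g \<in> borel_measurable M"
    using sub by (auto intro: measurable_from_subalg)
  define N where "N = {x\<in>space M. g x < f x}"
  have "Measurable.pred F (\<lambda>x. g x < f x)" by measurable
  then have N_F: "N \<in> sets F"
    using sub unfolding N_def pred_def subalgebra_def by simp
  then have [measurable]: "N \<in> sets M"
    using sub by (auto simp: subalgebra_def)
  have "(\<integral>\<^sup>+x\<in>N. g x \<partial>M) \<le> (\<integral>\<^sup>+x. g x \<partial>M)"
    by (intro nn_integral_mono) (auto simp: indicator_def)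
  then have fin_N: "(\<integral>\<^sup>+x\<in>N. g x \<partial>M) \<noteq> \<infinity>"
    using fin by (auto simp: top_unique)
  have "AE x in M. f x * indicator N x \<le> g x * indicator N x"
  proof (rule ccontr)
    assume "\<not> (AE x in M. f x * indicator N x \<le> g x * indicator N x)"
    then have "(\<integral>\<^sup>+x\<in>N. g x \<partial>M) < (\<integral>\<^sup>+x\<in>N. f x \<partial>M)"
      by (intro nn_integral_less fin_N) (auto simp: N_def indicator_def)
    with le[OF N_F] show False by simp
  qed
  with AE_space show ?thesis
  proof eventually_elim
    case (elim x)
    then show ?case
      by (cases "g x < f x") (auto simp: N_def)
  qed
qed

lemma (in prob_space) indep_sets_nn_integral_mult:
  fixes f g :: "'a \<Rightarrow> ennreal"
  assumes indep: "indep_sets E I" and stable: "\<And>i. i \<in> I \<Longrightarrow> Int_stable (E i)"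
    and J: "J \<subseteq> I" and K: "K \<subseteq> I" and disj: "J \<inter> K = {}"
    and f: "f \<in> borel_measurable (sigma (space M) (\<Union>i\<in>J. E i))"
    and g: "g \<in> borel_measurable (sigma (space M) (\<Union>i\<in>K. E i))"
  shows "(\<integral>\<^sup>+\<omega>. f \<omega> * g \<omega> \<partial>M) = (\<integral>\<^sup>+\<omega>. f \<omega> \<partial>M) * (\<integral>\<^sup>+\<omega>. g \<omega> \<partial>M)"
proof -
  define L where "L b = (if b then J else K)" for b
  define h where "h b = (if b then f else g)" for b
  have events: "(\<Union>i\<in>L b. E i) \<subseteq> events" for b
    using indep J K unfolding indep_sets_def L_def by auto
  have sets_L: "sets (sigma (space M) (\<Union>i\<in>L b. E i)) = sigma_sets (space M) (\<Union>i\<in>L b. E i)" for b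
    using events sets.sets_into_space by (intro sets_measure_of) blast
  have space_L: "space (sigma (space M) (\<Union>i\<in>L b. E i)) = space M" for b
    using events sets.sets_into_space by (intro space_measure_of) blast
  have sub_L: "subalgebra M (sigma (space M) (\<Union>i\<in>L b. E i))" for b
    unfolding subalgebra_def using sets_L[of b] space_L[of b] events[of b]
    by (simp add: sigma_sets_le_sets_iff)
  have h_L: "h b \<in> borel_measurable (sigma (space M) (\<Union>i\<in>L b. E i))" for b
    using f g by (simp add: h_def L_def)
  have "indep_sets (\<lambda>b. sigma_sets (space M) (\<Union>i\<in>L b. E i)) UNIV"
  proof (rule indep_sets_collect_sigma)
    show "indep_sets E (\<Union>b\<in>UNIV. L b)"
      by (rule indep_sets_mono_index[OF _ indep]) (use J K in \<open>auto simp: L_def\<close>)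
    show "disjoint_family_on L UNIV"
      using disj by (auto simp: disjoint_family_on_def L_def)
    show "Int_stable (E i)" if "i \<in> L b" for i b
      using that stable J K by (auto simp: L_def split: if_splits)
  qed
  then have "indep_vars (\<lambda>_. borel) h UNIV"
    unfolding indep_vars_def2
  proof (intro conjI ballI, goal_cases)
    case (1 b)
    show ?case
      by (rule measurable_from_subalg[OF sub_L h_L])
  next
    case 2
    show ?case
    proof (rule indep_sets_mono_sets[OF 2])
      show "{h b -` A \<inter> space M |A. A \<in> sets borel} \<subseteq> sigma_sets (space M) (\<Union>i\<in>L b. E i)" for b
        using measurable_sets[OF h_L[of b]] sets_L[of b] space_L[of b] by auto
    qed
  qed
  then have "(\<integral>\<^sup>+\<omega>. (\<Prod>b\<in>UNIV. h b \<omega>) \<partial>M) = (\<Prod>b\<in>UNIV. \<integral>\<^sup>+\<omega>. h b \<omega> \<partial>M)"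
    by (intro indep_vars_nn_integral) auto
  then show ?thesis
    by (simp add: UNIV_bool h_def mult.commute)
qed

lemma sigma_sets_Int_eq_generated:
  assumes "A \<in> sigma_sets \<Omega> (G \<union> G')" and disj: "\<And>a. a \<in> G' \<Longrightarrow> a \<inter> S = {}"
  shows "\<exists>A'\<in>sigma_sets \<Omega> G. A \<inter> S = A' \<inter> S"
  using assms(1)
proof induction
  case (Basic a)
  show ?case
  proof (cases "a \<in> G")
    case True
    then show ?thesis by (blast intro: sigma_sets.Basic)
  next
    case False
    then have "a \<inter> S = {} \<inter> S"
      using Basic disj by blast
    then show ?thesis by (blast intro: sigma_sets.Empty)
  qed
next
  case Empty
  show ?case by (blast intro: sigma_sets.Empty)
next
  case (Compl a)
  then obtain a' where a': "a' \<in> sigma_sets \<Omega> G" and eq: "a \<inter> S = a' \<inter> S"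
    by blast
  have "(\<Omega> - a) \<inter> S = (\<Omega> - a') \<inter> S"
    using eq by blast
  moreover have "\<Omega> - a' \<in> sigma_sets \<Omega> G"
    using a' by (rule sigma_sets.Compl)
  ultimately show ?case
    by blast
next
  case (Union a)
  then obtain a' where a': "\<And>n. a' n \<in> sigma_sets \<Omega> G" and eq: "\<And>n. a n \<inter> S = a' n \<inter> S"
    by metis
  have "(\<Union>n. a n) \<inter> S = (\<Union>n. a' n) \<inter> S"
    using eq by blast
  moreover have "(\<Union>n. a' n) \<in> sigma_sets \<Omega> G"
    using a' by (rule sigma_sets.Union)
  ultimately show ?case
    by blast
qed


lemma case_enat_eq_suminf:
  fixes f :: "nat \<Rightarrow> ennreal"
  shows "(case t of enat i \<Rightarrow> f i | \<infinity> \<Rightarrow> 0) = (\<Sum>i. f i * indicator {enat i} t)"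
proof (cases t)
  case (enat n)
  have "(\<lambda>i. f i * indicator {enat i} t) = (\<lambda>i. if i = n then f n else 0)"
    using enat by (auto simp: indicator_def)
  then show ?thesis
    using enat by (subst suminf_finite[of "{n}"]) auto
qed simp

section \<open>Hitting times\<close>

definition hitting_time :: "(nat \<Rightarrow> 'a \<Rightarrow> bool) \<Rightarrow> 'a \<Rightarrow> enat" where
  "hitting_time P \<omega> = (if \<exists>i. P i \<omega> then enat (LEAST i. P i \<omega>) else \<infinity>)"

lemma hitting_time_eq_enat_iff:
  "hitting_time P \<omega> = enat k \<longleftrightarrow> P k \<omega> \<and> (\<forall>i<k. \<not> P i \<omega>)"
proof
  assume "hitting_time P \<omega> = enat k"
  then have ex: "\<exists>i. P i \<omega>" and k: "(LEAST i. P i \<omega>) = k"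
    by (auto simp: hitting_time_def split: if_splits)
  show "P k \<omega> \<and> (\<forall>i<k. \<not> P i \<omega>)"
    using LeastI_ex[OF ex] not_less_Least[of _ "\<lambda>i. P i \<omega>"] by (simp add: k)
next
  assume k: "P k \<omega> \<and> (\<forall>i<k. \<not> P i \<omega>)"
  then have "(LEAST i. P i \<omega>) = k"
    by (intro Least_equality) (auto intro: leI)
  with k show "hitting_time P \<omega> = enat k"
    by (auto simp: hitting_time_def)
qed

lemma hitting_time_le_enat_iff:
  "hitting_time P \<omega> \<le> enat n \<longleftrightarrow> (\<exists>i\<le>n. P i \<omega>)"
proof
  assume le: "hitting_time P \<omega> \<le> enat n"
  then have ex: "\<exists>i. P i \<omega>"
    by (auto simp: hitting_time_def split: if_splits)
  then have "P (LEAST i. P i \<omega>) \<omega>"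
    by (rule LeastI_ex)
  moreover have "(LEAST i. P i \<omega>) \<le> n"
    using le ex by (simp add: hitting_time_def)
  ultimately show "\<exists>i\<le>n. P i \<omega>"
    by blast
next
  assume "\<exists>i\<le>n. P i \<omega>"
  then obtain i where "i \<le> n" "P i \<omega>"
    by blast
  then show "hitting_time P \<omega> \<le> enat n"
    using Least_le[of "\<lambda>i. P i \<omega>" i] by (auto simp: hitting_time_def)
qed

lemma stopping_time_hitting_time:
  assumes F: "filtration \<Omega> F" and P: "\<And>i. Measurable.pred (F (enat i)) (P i)"
  shows "stopping_time F (hitting_time P)"
proof
  fix t :: enat
  show "Measurable.pred (F t) (\<lambda>\<omega>. hitting_time P \<omega> \<le> t)"
  proof (cases t)
    case (enat n)
    have "Measurable.pred (F t) (P i)" if "i \<le> n" for i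
    proof -
      have "sets (F (enat i)) \<subseteq> sets (F t)"
        using that enat by (intro filtration.sets_F_mono[OF F]) simp
      then show ?thesis
        using P[of i] by (auto simp: pred_def filtration.space_F[OF F])
    qed
    then have "Measurable.pred (F t) (\<lambda>\<omega>. \<exists>i\<in>{..n}. P i \<omega>)"
      by (intro pred_intros_finite(4)) auto
    moreover have "hitting_time P \<omega> \<le> t \<longleftrightarrow> (\<exists>i\<in>{..n}. P i \<omega>)" for \<omega>
      using enat by (auto simp: hitting_time_le_enat_iff)
    ultimately show ?thesis
      by simp
  qed simp
qed

lemma hitting_time_cong: "(\<And>i. P i \<omega> = Q i \<omega>) \<Longrightarrow> hitting_time P \<omega> = hitting_time Q \<omega>"
  by (simp add: hitting_time_def)

lemma hitting_time_cong_upto: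
  assumes PQ: "\<And>i. i \<le> m \<Longrightarrow> P i \<omega> = Q i \<omega>" and Pm: "P m \<omega>"
  shows "hitting_time P \<omega> = hitting_time Q \<omega>"
proof -
  define k where "k = (LEAST i. P i \<omega>)"
  have hP: "hitting_time P \<omega> = enat k"
    using Pm unfolding hitting_time_def k_def by auto
  then have Pk: "P k \<omega>" and before: "\<forall>i<k. \<not> P i \<omega>"
    by (simp_all add: hitting_time_eq_enat_iff)
  have "k \<le> m"
    using before Pm by (auto intro: leI)
  then have "Q k \<omega> \<and> (\<forall>i<k. \<not> Q i \<omega>)"
    using PQ Pk before by simp
  then have "hitting_time Q \<omega> = enat k"
    by (simp add: hitting_time_eq_enat_iff)
  with hP show ?thesis
    by simp
qed

locale random_horizon =
  fixes M :: "'a measure" and X :: "nat \<Rightarrow> 'a \<Rightarrow> real" and H :: "'a \<Rightarrow> nat"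
  assumes prob: "prob_space M"
    and X_meas: "\<And>i. X i \<in> borel_measurable M"
    and X0: "\<And>\<omega>. \<omega> \<in> space M \<Longrightarrow> X 0 \<omega> = 0"
    and X_nonneg: "\<And>i \<omega>. \<omega> \<in> space M \<Longrightarrow> X i \<omega> \<ge> 0"
    and X_int: "integrable M (X 1)"
    and X_id: "\<And>i. i \<ge> 1 \<Longrightarrow> distr M borel (X i) = distr M borel (X 1)"
    and H_meas: "H \<in> measurable M (count_space UNIV)"
    and indep: "prob_space.indep_vars M (\<lambda>_. borel)
        (\<lambda>k. case k of None \<Rightarrow> (\<lambda>\<omega>. real (H \<omega>)) | Some j \<Rightarrow> X j) (insert None (Some ` {1..}))"
    and H_int: "integrable M (\<lambda>\<omega>. real (H \<omega>))"

sublocale random_horizon \<subseteq> prob_space M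
  by (rule prob)

context random_horizon
begin

abbreviation B :: "enat \<Rightarrow> 'a measure" where
  "B \<equiv> B_filt M X"

abbreviation F :: "enat \<Rightarrow> 'a measure" where
  "F \<equiv> F_filt M X H"

lemmas [measurable] = X_meas H_meas

definition B_gen :: "enat \<Rightarrow> 'a set set" where
  "B_gen t = {X j -` A \<inter> space M | j A. 1 \<le> j \<and> enat j \<le> t \<and> A \<in> sets borel}"

definition F_gen :: "enat \<Rightarrow> 'a set set" where
  "F_gen t = B_gen t \<union> {{\<omega>\<in>space M. H \<omega> = j - 1} | j. 1 \<le> j \<and> enat j \<le> t}"

lemma B_gen_sets: "B_gen t \<subseteq> sets M"
  unfolding B_gen_def by (auto intro!: measurable_sets[OF X_meas])

lemma F_gen_sets: "F_gen t \<subseteq> sets M"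
  using B_gen_sets unfolding F_gen_def by auto measurable

lemma sets_B: "sets (B t) = sigma_sets (space M) (B_gen t)"
  unfolding B_filt_def B_gen_def[symmetric]
  using B_gen_sets sets.sets_into_space by (intro sets_measure_of) blast

lemma space_B [simp]: "space (B t) = space M"
  unfolding B_filt_def B_gen_def[symmetric]
  using B_gen_sets sets.sets_into_space by (intro space_measure_of) blast

lemma sets_F: "sets (F t) = sigma_sets (space M) (F_gen t)"
  unfolding F_filt_def B_gen_def[symmetric] F_gen_def[symmetric]
  using F_gen_sets sets.sets_into_space by (intro sets_measure_of) blast

lemma space_F [simp]: "space (F t) = space M"
  unfolding F_filt_def B_gen_def[symmetric] F_gen_def[symmetric]
  using F_gen_sets sets.sets_into_space by (intro space_measure_of) blast

lemma subalgebra_B: "subalgebra M (B t)"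
  using B_gen_sets by (simp add: subalgebra_def sets_B sigma_sets_le_sets_iff)

lemma sets_B_subset: "A \<in> sets (B t) \<Longrightarrow> A \<in> sets M"
  using subalgebra_B by (auto simp: subalgebra_def)

lemma sigma_finite_subalgebra_B: "sigma_finite_subalgebra M (B t)"
proof -
  have "finite_measure_subalgebra M (B t)"
    unfolding finite_measure_subalgebra_def finite_measure_subalgebra_axioms_def
    using subalgebra_B finite_measure_axioms by auto
  then show ?thesis
    by (rule finite_measure_subalgebra_is_sigma_finite)
qed

lemma sets_B_mono: "s \<le> t \<Longrightarrow> sets (B s) \<subseteq> sets (B t)"
  unfolding sets_B B_gen_def by (rule sigma_sets_mono') (blast intro: order_trans)

lemma sets_F_mono: "s \<le> t \<Longrightarrow> sets (F s) \<subseteq> sets (F t)"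
  unfolding sets_F F_gen_def B_gen_def by (rule sigma_sets_mono') (blast intro: order_trans)

lemma sets_B_subset_F: "sets (B t) \<subseteq> sets (F t)"
  unfolding sets_B sets_F F_gen_def by (rule sigma_sets_mono') auto

lemma filtration_B: "filtration (space M) B"
  by unfold_locales (simp_all add: sets_B_mono)

lemma filtration_F: "filtration (space M) F"
  by unfold_locales (simp_all add: sets_F_mono)

lemma X_measurable_B: "enat i \<le> t \<Longrightarrow> X i \<in> borel_measurable (B t)"
proof (cases "i = 0")
  case True
  then show ?thesis
    using X0 by (subst measurable_cong[where g = "\<lambda>_. 0"]) simp_all
next
  case False
  assume "enat i \<le> t"
  show ?thesis
  proof (rule measurableI)
    fix A :: "real set" assume "A \<in> sets borel"
    then have "X i -` A \<inter> space M \<in> B_gen t"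
      using False \<open>enat i \<le> t\<close> unfolding B_gen_def by (auto intro!: exI[of _ i])
    then show "X i -` A \<inter> space (B t) \<in> sets (B t)"
      unfolding sets_B by auto
  qed simp
qed

lemma Z_seq_measurable_B: "enat i \<le> t \<Longrightarrow> Z_seq M X H i \<in> borel_measurable (B t)"
  unfolding Z_seq_def using X_measurable_B by measurable

lemma Z_seq_measurable_B_at [measurable]: "Z_seq M X H i \<in> borel_measurable (B (enat i))"
  by (rule Z_seq_measurable_B) simp

lemma T_B_subset_T_star: "\<zeta> \<in> T_B M X \<Longrightarrow> \<zeta> \<in> T_star M X H"
  unfolding T_B_def T_star_def stopping_time_def pred_def
  using sets_B_subset_F by auto

lemma stopping_time_H_Suc: "stopping_time F (\<lambda>\<omega>. enat (H \<omega> + 1))"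
proof
  fix t :: enat
  show "Measurable.pred (F t) (\<lambda>\<omega>. enat (H \<omega> + 1) \<le> t)"
  proof (cases t)
    case (enat n)
    have "{\<omega>\<in>space M. H \<omega> = j - 1} \<in> sets (F t)" if "j \<in> {1..n}" for j
      using that enat unfolding sets_F F_gen_def by auto
    then have "(\<Union>j\<in>{1..n}. {\<omega>\<in>space M. H \<omega> = j - 1}) \<in> sets (F t)"
      by blast
    moreover have "{\<omega>\<in>space M. enat (H \<omega> + 1) \<le> t} = (\<Union>j\<in>{1..n}. {\<omega>\<in>space M. H \<omega> = j - 1})"
      using enat by (auto intro!: bexI[of _ "Suc (H _)"])
    ultimately show ?thesis
      by (simp add: pred_def)
  qed simp
qed

lemma min_H_Suc_T_star:
  "\<zeta> \<in> T_B M X \<Longrightarrow> (\<lambda>\<omega>. min (\<zeta> \<omega>) (enat (H \<omega> + 1))) \<in> T_star M X H"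
  using stopping_time_min[OF _ stopping_time_H_Suc] T_B_subset_T_star
  by (simp add: T_star_def)

section \<open>Independence\<close>

definition coord_events :: "nat option \<Rightarrow> 'a set set" where
  "coord_events k = {(case k of None \<Rightarrow> (\<lambda>\<omega>. real (H \<omega>)) | Some j \<Rightarrow> X j) -` A \<inter> space M
     | A. A \<in> sets borel}"

lemma coord_events_sets: "coord_events k \<subseteq> sets M"
  unfolding coord_events_def by (cases k) (auto intro!: measurable_sets[OF X_meas])

lemma sets_sigma_coord_events:
  "sets (sigma (space M) (\<Union>k\<in>K. coord_events k)) = sigma_sets (space M) (\<Union>k\<in>K. coord_events k)"
  using coord_events_sets sets.sets_into_space by (intro sets_measure_of) blast

lemma space_sigma_coord_events: "space (sigma (space M) (\<Union>k\<in>K. coord_events k)) = space M"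
  using coord_events_sets sets.sets_into_space by (intro space_measure_of) blast

lemma indep_coord_events: "indep_sets coord_events (insert None (Some ` {1..}))"
  using indep unfolding indep_vars_def2 coord_events_def by simp

lemma Int_stable_coord_events: "Int_stable (coord_events k)"
proof (rule Int_stableI)
  fix a b assume "a \<in> coord_events k" "b \<in> coord_events k"
  then obtain A A' where "A \<in> sets borel" "A' \<in> sets borel"
    and "a = (case k of None \<Rightarrow> (\<lambda>\<omega>. real (H \<omega>)) | Some j \<Rightarrow> X j) -` A \<inter> space M"
    and "b = (case k of None \<Rightarrow> (\<lambda>\<omega>. real (H \<omega>)) | Some j \<Rightarrow> X j) -` A' \<inter> space M"
    unfolding coord_events_def by blast
  then show "a \<inter> b \<in> coord_events k"
    unfolding coord_events_def by (auto intro!: exI[of _ "A \<inter> A'"])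
qed

lemma B_eq_sigma_coord_events: "B (enat j) = sigma (space M) (\<Union>k\<in>Some ` {1..j}. coord_events k)"
proof -
  have "B_gen (enat j) = (\<Union>k\<in>Some ` {1..j}. coord_events k)"
    unfolding B_gen_def coord_events_def by fastforce
  then show ?thesis
    unfolding B_filt_def B_gen_def by simp
qed

lemma X_measurable_coord_events: "X j \<in> borel_measurable (sigma (space M) (coord_events (Some j)))"
proof (rule measurableI)
  fix A :: "real set" assume "A \<in> sets borel"
  then have "X j -` A \<inter> space M \<in> coord_events (Some j)"
    unfolding coord_events_def by auto
  then show "X j -` A \<inter> space (sigma (space M) (coord_events (Some j)))
      \<in> sets (sigma (space M) (coord_events (Some j)))"
    using sets_sigma_coord_events[of "{Some j}"] space_sigma_coord_events[of "{Some j}"] by auto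
qed (use space_sigma_coord_events[of "{Some j}"] in auto)

lemma nn_integral_mult_indep_coords:
  fixes f g :: "'a \<Rightarrow> ennreal"
  assumes J: "J \<subseteq> {1..}" and K: "K \<subseteq> insert None (Some ` {1..})" and disj: "Some ` J \<inter> K = {}"
    and f: "f \<in> borel_measurable (sigma (space M) (\<Union>k\<in>Some ` J. coord_events k))"
    and g: "g \<in> borel_measurable (sigma (space M) (\<Union>k\<in>K. coord_events k))"
  shows "(\<integral>\<^sup>+\<omega>. f \<omega> * g \<omega> \<partial>M) = (\<integral>\<^sup>+\<omega>. f \<omega> \<partial>M) * (\<integral>\<^sup>+\<omega>. g \<omega> \<partial>M)"
  using J K disj f g
  by (intro indep_sets_nn_integral_mult[OF indep_coord_events Int_stable_coord_events]) auto

lemma set_nn_integral_indep_next: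
  fixes h :: "real \<Rightarrow> ennreal"
  assumes A: "A \<in> sets (B (enat j))" and [measurable]: "h \<in> borel_measurable borel"
  shows "(\<integral>\<^sup>+\<omega>\<in>A. h (X (Suc j) \<omega>) \<partial>M) = (\<integral>\<^sup>+\<omega>. h (X (Suc j) \<omega>) \<partial>M) * emeasure M A"
proof -
  have "(\<lambda>\<omega>. h (X (Suc j) \<omega>)) \<in> borel_measurable (sigma (space M) (\<Union>k\<in>Some ` {Suc j}. coord_events k))"
    using measurable_compose[OF X_measurable_coord_events assms(2)] by simp
  moreover have "indicator A \<in> borel_measurable (sigma (space M) (\<Union>k\<in>Some ` {1..j}. coord_events k))"
    using A unfolding B_eq_sigma_coord_events by simp
  ultimately have "(\<integral>\<^sup>+\<omega>\<in>A. h (X (Suc j) \<omega>) \<partial>M) = (\<integral>\<^sup>+\<omega>. h (X (Suc j) \<omega>) \<partial>M) * (\<integral>\<^sup>+\<omega>. indicator A \<omega> \<partial>M)"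
    by (intro nn_integral_mult_indep_coords[of "{Suc j}" "Some ` {1..j}"]) auto
  then show ?thesis
    using sets_B_subset[OF A] by simp
qed

lemma set_nn_integral_indep_horizon:
  fixes f :: "'a \<Rightarrow> ennreal"
  assumes f: "f \<in> borel_measurable (B (enat i))"
  shows "(\<integral>\<^sup>+\<omega>\<in>{\<omega>\<in>space M. i \<le> H \<omega>}. f \<omega> \<partial>M) = (\<integral>\<^sup>+\<omega>. f \<omega> \<partial>M) * Surv M H i"
proof -
  have "{\<omega>\<in>space M. i \<le> H \<omega>} \<in> coord_events None"
    unfolding coord_events_def by (auto intro!: exI[of _ "{real i..}"])
  then have "indicator {\<omega>\<in>space M. i \<le> H \<omega>} \<in> borel_measurable (sigma (space M) (\<Union>k\<in>{None}. coord_events k))"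
    using sets_sigma_coord_events[of "{None}"] by (intro borel_measurable_indicator) auto
  moreover have "f \<in> borel_measurable (sigma (space M) (\<Union>k\<in>Some ` {1..i}. coord_events k))"
    using f unfolding B_eq_sigma_coord_events .
  ultimately have "(\<integral>\<^sup>+\<omega>\<in>{\<omega>\<in>space M. i \<le> H \<omega>}. f \<omega> \<partial>M)
      = (\<integral>\<^sup>+\<omega>. f \<omega> \<partial>M) * emeasure M {\<omega>\<in>space M. i \<le> H \<omega>}"
    by (subst nn_integral_mult_indep_coords[of "{1..i}" "{None}"]) auto
  then show ?thesis
    by (simp add: Surv_def emeasure_eq_measure)
qed

section \<open>The value of the discounted problem\<close>

definition Z :: "nat \<Rightarrow> 'a \<Rightarrow> ennreal" where
  "Z i \<omega> = ennreal (Z_seq M X H i \<omega>)"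

lemma Z_measurable [measurable]: "Z i \<in> borel_measurable M"
  unfolding Z_def Z_seq_def by measurable

lemma Z_measurable_B: "enat i \<le> t \<Longrightarrow> Z i \<in> borel_measurable (B t)"
  unfolding Z_def using Z_seq_measurable_B by measurable

lemma Surv_nonneg: "0 \<le> Surv M H i"
  unfolding Surv_def by simp

lemma Z_eq: "\<omega> \<in> space M \<Longrightarrow> Z i \<omega> = ennreal (Surv M H i) * ennreal (X i \<omega>)"
  unfolding Z_def Z_seq_def by (simp add: ennreal_mult Surv_nonneg X_nonneg)

definition mean_X :: ennreal where
  "mean_X = (\<integral>\<^sup>+\<omega>. ennreal (X 1 \<omega>) \<partial>M)"

lemma mean_X_finite: "mean_X < \<top>"
  using integrableD(2)[OF X_int] unfolding mean_X_def by (simp add: top.not_eq_extremum)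

lemma nn_integral_X_le: "(\<integral>\<^sup>+\<omega>. ennreal (X i \<omega>) \<partial>M) \<le> mean_X"
proof (cases "i = 0")
  case True
  then show ?thesis
    using X0 by (simp cong: nn_integral_cong)
next
  case False
  have "(\<integral>\<^sup>+\<omega>. ennreal (X i \<omega>) \<partial>M) = (\<integral>\<^sup>+x. ennreal x \<partial>distr M borel (X i))"
    by (simp add: nn_integral_distr)
  also have "\<dots> = (\<integral>\<^sup>+x. ennreal x \<partial>distr M borel (X 1))"
    using False X_id[of i] by simp
  also have "\<dots> = mean_X"
    unfolding mean_X_def by (simp add: nn_integral_distr)
  finally show ?thesis
    by simp
qed

lemma nn_integral_Z_le: "(\<integral>\<^sup>+\<omega>. Z i \<omega> \<partial>M) \<le> ennreal (Surv M H i) * mean_X"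
proof -
  have "(\<integral>\<^sup>+\<omega>. Z i \<omega> \<partial>M) = ennreal (Surv M H i) * (\<integral>\<^sup>+\<omega>. ennreal (X i \<omega>) \<partial>M)"
    by (simp add: Z_eq nn_integral_cmult cong: nn_integral_cong)
  then show ?thesis
    using nn_integral_X_le by (simp add: mult_left_mono)
qed

text \<open>The sum of the survival function is \<open>\<mu> + 1\<close>.\<close>

lemma summable_Surv: "summable (Surv M H)"
proof (rule summable_suminf_not_top)
  have count: "(\<Sum>i. indicator {\<omega>\<in>space M. i \<le> H \<omega>} \<omega>) = ennreal (real (H \<omega>) + 1)"
    if "\<omega> \<in> space M" for \<omega>
  proof -
    have "(\<Sum>i. indicator {\<omega>\<in>space M. i \<le> H \<omega>} \<omega> :: ennreal)
        = (\<Sum>i\<le>H \<omega>. indicator {\<omega>\<in>space M. i \<le> H \<omega>} \<omega>)"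
      by (rule suminf_finite) auto
    also have "\<dots> = (\<Sum>i\<le>H \<omega>. 1)"
      using that by (intro sum.cong) auto
    also have "\<dots> = ennreal (real (H \<omega>) + 1)"
      by (simp add: ennreal_of_nat_eq_real_of_nat)
    finally show ?thesis .
  qed
  have "(\<Sum>i. ennreal (Surv M H i)) = (\<Sum>i. emeasure M {\<omega>\<in>space M. i \<le> H \<omega>})"
    by (simp add: Surv_def emeasure_eq_measure)
  also have "\<dots> = (\<integral>\<^sup>+\<omega>. (\<Sum>i. indicator {\<omega>\<in>space M. i \<le> H \<omega>} \<omega>) \<partial>M)"
    by (subst nn_integral_suminf) auto
  also have "\<dots> = (\<integral>\<^sup>+\<omega>. ennreal (real (H \<omega>) + 1) \<partial>M)"
    by (intro nn_integral_cong count)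
  also have "\<dots> < \<infinity>"
    using integrableD(2)[of M "\<lambda>\<omega>. real (H \<omega>) + 1"] H_int by (simp add: top.not_eq_extremum)
  finally show "(\<Sum>i. ennreal (Surv M H i)) \<noteq> \<top>"
    by simp
qed (rule Surv_nonneg)

definition tail_bound :: "nat \<Rightarrow> ennreal" where
  "tail_bound k = ennreal (\<Sum>i. Surv M H (i + k)) * mean_X"

lemma tail_bound_Suc: "tail_bound k = ennreal (Surv M H k) * mean_X + tail_bound (Suc k)"
proof -
  have summable: "summable (\<lambda>i. Surv M H (i + n))" for n
    using summable_ignore_initial_segment[OF summable_Surv] .
  have "(\<Sum>i. Surv M H (i + k)) = Surv M H k + (\<Sum>i. Surv M H (i + Suc k))"
    using suminf_split_head[OF summable[of k]] by simp
  moreover have "0 \<le> (\<Sum>i. Surv M H (i + Suc k))"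
    by (intro suminf_nonneg summable Surv_nonneg)
  ultimately show ?thesis
    unfolding tail_bound_def using Surv_nonneg by (simp add: ennreal_plus distrib_right)
qed

lemma tail_bound_tendsto_0: "tail_bound \<longlonglongrightarrow> 0"
proof -
  have "(\<lambda>k. \<Sum>i. Surv M H (i + k)) = (\<lambda>k. (\<Sum>i. Surv M H i) - (\<Sum>i<k. Surv M H i))"
    using suminf_minus_initial_segment[OF summable_Surv] by simp
  moreover have "(\<lambda>k. (\<Sum>i. Surv M H i) - (\<Sum>i<k. Surv M H i)) \<longlonglongrightarrow> (\<Sum>i. Surv M H i) - (\<Sum>i. Surv M H i)"
    by (intro tendsto_diff tendsto_const summable_LIMSEQ summable_Surv)
  ultimately have "(\<lambda>k. ennreal (\<Sum>i. Surv M H (i + k))) \<longlonglongrightarrow> ennreal 0"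
    by (intro tendsto_ennrealI) simp
  from ennreal_tendsto_cmult[OF mean_X_finite this] show ?thesis
    unfolding tail_bound_def by (simp add: mult.commute)
qed

text \<open>\<open>val_horizon d k\<close> is the value of stopping optimally among \<open>Z\<^sub>k, \<dots>, Z\<^sub>k\<^sub>+\<^sub>d\<^sub>-\<^sub>1\<close>,
  with reward \<open>0\<close> if none is chosen: since the \<open>Z\<^sub>i\<close> are independent, the continuation
  values are constants.\<close>

fun val_horizon :: "nat \<Rightarrow> nat \<Rightarrow> ennreal" where
  "val_horizon 0 k = 0"
| "val_horizon (Suc d) k = (\<integral>\<^sup>+\<omega>. max (Z k \<omega>) (val_horizon d (Suc k)) \<partial>M)"

lemma val_horizon_le_Suc: "val_horizon d k \<le> val_horizon (Suc d) k"
proof (induction d arbitrary: k)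
  case (Suc d)
  then show ?case
    by (simp only: val_horizon.simps) (intro nn_integral_mono max.mono order_refl)
qed simp

lemma val_horizon_le_tail_bound: "val_horizon d k \<le> tail_bound k"
proof (induction d arbitrary: k)
  case (Suc d)
  have "val_horizon (Suc d) k \<le> (\<integral>\<^sup>+\<omega>. Z k \<omega> + val_horizon d (Suc k) \<partial>M)"
    by (simp only: val_horizon.simps) (intro nn_integral_mono, simp)
  also have "\<dots> = (\<integral>\<^sup>+\<omega>. Z k \<omega> \<partial>M) + val_horizon d (Suc k)"
    by (simp add: nn_integral_add emeasure_space_1)
  also have "\<dots> \<le> ennreal (Surv M H k) * mean_X + tail_bound (Suc k)"
    by (intro add_mono nn_integral_Z_le Suc.IH)
  finally show ?case
    by (simp only: tail_bound_Suc[of k])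
qed simp

definition val :: "nat \<Rightarrow> ennreal" where
  "val k = (SUP d. val_horizon d k)"

lemma val_le_tail_bound: "val k \<le> tail_bound k"
  unfolding val_def by (intro SUP_least val_horizon_le_tail_bound)

lemma val_finite: "val k < \<infinity>"
proof -
  have "tail_bound k < \<infinity>"
    using mean_X_finite by (simp add: tail_bound_def ennreal_mult_less_top)
  with val_le_tail_bound show ?thesis
    by (rule order.strict_trans1)
qed

lemma val_tendsto_0: "val \<longlonglongrightarrow> 0"
  by (rule tendsto_sandwich[OF _ _ tendsto_const tail_bound_tendsto_0]) (simp_all add: val_le_tail_bound)

lemma val_eq: "val k = (\<integral>\<^sup>+\<omega>. max (Z k \<omega>) (val (Suc k)) \<partial>M)"
proof -
  have "val k = (SUP d. val_horizon (Suc d) k)"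
    unfolding val_def
  proof (rule antisym)
    show "(SUP d. val_horizon d k) \<le> (SUP d. val_horizon (Suc d) k)"
      by (rule SUP_mono) (use val_horizon_le_Suc in blast)
    show "(SUP d. val_horizon (Suc d) k) \<le> (SUP d. val_horizon d k)"
      by (rule SUP_least) (rule SUP_upper, simp)
  qed
  also have "\<dots> = (SUP d. \<integral>\<^sup>+\<omega>. max (Z k \<omega>) (val_horizon d (Suc k)) \<partial>M)"
    by simp
  also have "\<dots> = (\<integral>\<^sup>+\<omega>. (SUP d. max (Z k \<omega>) (val_horizon d (Suc k))) \<partial>M)"
  proof (rule nn_integral_monotone_convergence_SUP[symmetric])
    show "incseq (\<lambda>d \<omega>. max (Z k \<omega>) (val_horizon d (Suc k)))"
      by (rule incseq_SucI) (rule le_funI, rule max.mono[OF order_refl val_horizon_le_Suc])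
  qed simp
  also have "\<dots> = (\<integral>\<^sup>+\<omega>. max (Z k \<omega>) (val (Suc k)) \<partial>M)"
    unfolding val_def by (simp add: sup_max[symmetric] SUP_sup_const1)
  finally show ?thesis .
qed

definition env :: "nat \<Rightarrow> 'a \<Rightarrow> ennreal" where
  "env k \<omega> = max (Z k \<omega>) (val (Suc k))"

lemma env_measurable [measurable]: "env k \<in> borel_measurable M"
  unfolding env_def by measurable

lemma env_measurable_B: "enat k \<le> t \<Longrightarrow> env k \<in> borel_measurable (B t)"
  unfolding env_def using Z_measurable_B by measurable

lemma nn_integral_env: "(\<integral>\<^sup>+\<omega>. env k \<omega> \<partial>M) = val k"
  unfolding env_def by (rule val_eq[symmetric])

lemma set_nn_integral_env_Suc:
  assumes "A \<in> sets (B (enat j))"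
  shows "(\<integral>\<^sup>+\<omega>\<in>A. env (Suc j) \<omega> \<partial>M) = val (Suc j) * emeasure M A"
proof -
  define h where "h x = max (ennreal (Surv M H (Suc j) * x)) (val (Suc (Suc j)))" for x
  have env_h: "env (Suc j) = (\<lambda>\<omega>. h (X (Suc j) \<omega>))"
    unfolding env_def h_def Z_def Z_seq_def by auto
  have "h \<in> borel_measurable borel"
    unfolding h_def by measurable
  moreover have "(\<integral>\<^sup>+\<omega>. h (X (Suc j) \<omega>) \<partial>M) = val (Suc j)"
    using nn_integral_env[of "Suc j"] unfolding env_h .
  ultimately show ?thesis
    unfolding env_h using set_nn_integral_indep_next[OF assms] by simp
qed

section \<open>Optimal stopping of the discounted rewards\<close>

lemma T_B_sets:
  assumes \<zeta>: "\<zeta> \<in> T_B M X" and A: "A \<in> sets (B (enat k))"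
  shows "{\<omega>\<in>A. \<zeta> \<omega> = enat k} \<in> sets (B (enat k))"
    and "{\<omega>\<in>A. \<zeta> \<omega> < enat k} \<in> sets (B (enat k))"
    and "{\<omega>\<in>A. enat k < \<zeta> \<omega>} \<in> sets (B (enat k))"
proof -
  have st: "stopping_time B \<zeta>"
    using \<zeta> by (simp add: T_B_def)
  have restrict: "{\<omega>\<in>A. P \<omega>} \<in> sets (B (enat k))" if "Measurable.pred (B (enat k)) P" for P
  proof -
    have "{\<omega>\<in>A. P \<omega>} = A \<inter> {\<omega>\<in>space (B (enat k)). P \<omega>}"
      using sets.sets_into_space[OF A] by auto
    then show ?thesis
      using that A by (auto simp: pred_def)
  qed
  show "{\<omega>\<in>A. \<zeta> \<omega> = enat k} \<in> sets (B (enat k))"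
    by (rule restrict[OF filtration.stopping_time_eq_const[OF filtration_B st]])
  show "{\<omega>\<in>A. \<zeta> \<omega> < enat k} \<in> sets (B (enat k))"
    by (rule restrict[OF filtration.stopping_time_less_const[OF filtration_B st]])
  show "{\<omega>\<in>A. enat k < \<zeta> \<omega>} \<in> sets (B (enat k))"
    by (rule restrict[OF stopping_timeD2[OF st]])
qed

definition Z_stopped :: "('a \<Rightarrow> enat) \<Rightarrow> 'a \<Rightarrow> ennreal" where
  "Z_stopped \<zeta> \<omega> = ennreal (Z_stop M X H \<zeta> \<omega>)"

lemma Z_stopped_eq_suminf:
  assumes "\<omega> \<in> space M"
  shows "Z_stopped \<zeta> \<omega> = (\<Sum>i. Z i \<omega> * indicator {\<omega>\<in>space M. \<zeta> \<omega> = enat i} \<omega>)"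
proof -
  have "Z_stopped \<zeta> \<omega> = (case \<zeta> \<omega> of enat i \<Rightarrow> Z i \<omega> | \<infinity> \<Rightarrow> 0)"
    by (cases "\<zeta> \<omega>") (simp_all add: Z_stopped_def Z_stop_def Z_def)
  also have "\<dots> = (\<Sum>i. Z i \<omega> * indicator {enat i} (\<zeta> \<omega>))"
    by (rule case_enat_eq_suminf)
  finally show ?thesis
    using assms by (simp add: indicator_def)
qed

lemma Z_stopped_measurable:
  assumes "\<zeta> \<in> T_B M X"
  shows "Z_stopped \<zeta> \<in> borel_measurable M"
proof -
  have [measurable]: "{\<omega>\<in>space M. \<zeta> \<omega> = enat i} \<in> sets M" for i
    using sets_B_subset[OF T_B_sets(1)[OF assms sets.top]] by simp
  show ?thesis
    by (subst measurable_cong[OF Z_stopped_eq_suminf]) simp_all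
qed

lemma Z_stopped_cong_AE:
  assumes "AE \<omega> in M. \<zeta> \<omega> = \<zeta>' \<omega>"
  shows "(\<integral>\<^sup>+\<omega>. Z_stopped \<zeta> \<omega> \<partial>M) = (\<integral>\<^sup>+\<omega>. Z_stopped \<zeta>' \<omega> \<partial>M)"
  using assms by (intro nn_integral_cong_AE) (auto simp: Z_stopped_def Z_stop_def)

definition stop_at :: "nat \<Rightarrow> 'a \<Rightarrow> bool" where
  "stop_at k \<omega> \<longleftrightarrow> val (Suc k) \<le> Z k \<omega>"

lemma pred_stop_at: "Measurable.pred (B (enat k)) (stop_at k)"
  unfolding stop_at_def using Z_measurable_B[of k "enat k"] by measurable

lemma env_eq_Z: "stop_at k \<omega> \<Longrightarrow> env k \<omega> = Z k \<omega>"
  by (simp add: env_def stop_at_def max_def)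

lemma env_eq_val: "\<not> stop_at k \<omega> \<Longrightarrow> env k \<omega> = val (Suc k)"
  using linear[of "Z k \<omega>" "val (Suc k)"] by (auto simp: env_def stop_at_def max_def)

lemma set_nn_integral_env_Suc_const:
  "A \<in> sets (B (enat k)) \<Longrightarrow> (\<integral>\<^sup>+\<omega>\<in>A. env (Suc k) \<omega> \<partial>M) = (\<integral>\<^sup>+\<omega>\<in>A. val (Suc k) \<partial>M)"
  using set_nn_integral_env_Suc nn_integral_cmult_indicator[OF sets_B_subset] by simp

lemma env_step_le:
  assumes [measurable]: "S \<in> sets M" and T: "T \<in> sets (B (enat k))" and disj: "S \<inter> T = {}"
  shows "(\<integral>\<^sup>+\<omega>\<in>S. Z k \<omega> \<partial>M) + (\<integral>\<^sup>+\<omega>\<in>T. env (Suc k) \<omega> \<partial>M) \<le> (\<integral>\<^sup>+\<omega>\<in>S \<union> T. env k \<omega> \<partial>M)"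
proof -
  have [measurable]: "T \<in> sets M"
    using sets_B_subset[OF T] .
  have "(\<integral>\<^sup>+\<omega>\<in>S. Z k \<omega> \<partial>M) + (\<integral>\<^sup>+\<omega>\<in>T. val (Suc k) \<partial>M)
      \<le> (\<integral>\<^sup>+\<omega>\<in>S. env k \<omega> \<partial>M) + (\<integral>\<^sup>+\<omega>\<in>T. env k \<omega> \<partial>M)"
    by (intro add_mono nn_integral_mono) (auto simp: env_def split: split_indicator)
  then show ?thesis
    using disj by (simp add: set_nn_integral_env_Suc_const[OF T] nn_integral_disjoint_pair)
qed

lemma env_step_eq:
  assumes [measurable]: "S \<in> sets M" and T: "T \<in> sets (B (enat k))" and disj: "S \<inter> T = {}"
    and stop: "\<And>\<omega>. \<omega> \<in> S \<Longrightarrow> stop_at k \<omega>" and cont: "\<And>\<omega>. \<omega> \<in> T \<Longrightarrow> \<not> stop_at k \<omega>"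
  shows "(\<integral>\<^sup>+\<omega>\<in>S. Z k \<omega> \<partial>M) + (\<integral>\<^sup>+\<omega>\<in>T. env (Suc k) \<omega> \<partial>M) = (\<integral>\<^sup>+\<omega>\<in>S \<union> T. env k \<omega> \<partial>M)"
proof -
  have [measurable]: "T \<in> sets M"
    using sets_B_subset[OF T] .
  have "(\<integral>\<^sup>+\<omega>\<in>S. Z k \<omega> \<partial>M) + (\<integral>\<^sup>+\<omega>\<in>T. val (Suc k) \<partial>M)
      = (\<integral>\<^sup>+\<omega>\<in>S. env k \<omega> \<partial>M) + (\<integral>\<^sup>+\<omega>\<in>T. env k \<omega> \<partial>M)"
    using stop cont
    by (intro arg_cong2[where f = "(+)"] nn_integral_cong)
       (auto simp: env_eq_Z env_eq_val split: split_indicator)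
  then show ?thesis
    using disj by (simp add: set_nn_integral_env_Suc_const[OF T] nn_integral_disjoint_pair)
qed

text \<open>Follow \<open>\<zeta>\<close> before time \<open>k\<close>, then collect the Snell envelope. This gain decreases in \<open>k\<close>,
  and it is constant for \<open>opt_time\<close>; letting \<open>k \<rightarrow> \<infinity>\<close> gives optimality.\<close>

definition switched_gain :: "('a \<Rightarrow> enat) \<Rightarrow> 'a set \<Rightarrow> nat \<Rightarrow> ennreal" where
  "switched_gain \<zeta> A k = (\<integral>\<^sup>+\<omega>\<in>{\<omega>\<in>A. \<zeta> \<omega> < enat k}. Z_stopped \<zeta> \<omega> \<partial>M)
     + (\<integral>\<^sup>+\<omega>\<in>{\<omega>\<in>A. enat k \<le> \<zeta> \<omega>}. env k \<omega> \<partial>M)"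

lemma enat_less_Suc_iff: "t < enat (Suc k) \<longleftrightarrow> t < enat k \<or> t = enat k"
  by (cases t) auto

lemma switched_gain_split:
  assumes \<zeta>: "\<zeta> \<in> T_B M X" and A: "A \<in> sets (B (enat k))"
  shows "switched_gain \<zeta> A k = (\<integral>\<^sup>+\<omega>\<in>{\<omega>\<in>A. \<zeta> \<omega> < enat k}. Z_stopped \<zeta> \<omega> \<partial>M)
      + (\<integral>\<^sup>+\<omega>\<in>{\<omega>\<in>A. \<zeta> \<omega> = enat k} \<union> {\<omega>\<in>A. enat k < \<zeta> \<omega>}. env k \<omega> \<partial>M)"
    and "switched_gain \<zeta> A (Suc k) = (\<integral>\<^sup>+\<omega>\<in>{\<omega>\<in>A. \<zeta> \<omega> < enat k}. Z_stopped \<zeta> \<omega> \<partial>M)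
      + ((\<integral>\<^sup>+\<omega>\<in>{\<omega>\<in>A. \<zeta> \<omega> = enat k}. Z k \<omega> \<partial>M)
         + (\<integral>\<^sup>+\<omega>\<in>{\<omega>\<in>A. enat k < \<zeta> \<omega>}. env (Suc k) \<omega> \<partial>M))"
proof -
  note [measurable] = Z_stopped_measurable[OF \<zeta>]
    sets_B_subset[OF T_B_sets(1)[OF \<zeta> A]] sets_B_subset[OF T_B_sets(2)[OF \<zeta> A]]
  have "{\<omega>\<in>A. enat k \<le> \<zeta> \<omega>} = {\<omega>\<in>A. \<zeta> \<omega> = enat k} \<union> {\<omega>\<in>A. enat k < \<zeta> \<omega>}"
    by auto
  then show "switched_gain \<zeta> A k = (\<integral>\<^sup>+\<omega>\<in>{\<omega>\<in>A. \<zeta> \<omega> < enat k}. Z_stopped \<zeta> \<omega> \<partial>M)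
      + (\<integral>\<^sup>+\<omega>\<in>{\<omega>\<in>A. \<zeta> \<omega> = enat k} \<union> {\<omega>\<in>A. enat k < \<zeta> \<omega>}. env k \<omega> \<partial>M)"
    by (simp add: switched_gain_def)
  have lt: "{\<omega>\<in>A. \<zeta> \<omega> < enat (Suc k)} = {\<omega>\<in>A. \<zeta> \<omega> < enat k} \<union> {\<omega>\<in>A. \<zeta> \<omega> = enat k}"
    by (auto simp: enat_less_Suc_iff)
  have ge: "{\<omega>\<in>A. enat (Suc k) \<le> \<zeta> \<omega>} = {\<omega>\<in>A. enat k < \<zeta> \<omega>}"
    by (simp add: Suc_ile_eq)
  have at_k: "(\<integral>\<^sup>+\<omega>\<in>{\<omega>\<in>A. \<zeta> \<omega> = enat k}. Z_stopped \<zeta> \<omega> \<partial>M)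
      = (\<integral>\<^sup>+\<omega>\<in>{\<omega>\<in>A. \<zeta> \<omega> = enat k}. Z k \<omega> \<partial>M)"
    by (intro nn_integral_cong) (simp add: Z_stopped_def Z_stop_def Z_def split: split_indicator)
  show "switched_gain \<zeta> A (Suc k) = (\<integral>\<^sup>+\<omega>\<in>{\<omega>\<in>A. \<zeta> \<omega> < enat k}. Z_stopped \<zeta> \<omega> \<partial>M)
      + ((\<integral>\<^sup>+\<omega>\<in>{\<omega>\<in>A. \<zeta> \<omega> = enat k}. Z k \<omega> \<partial>M)
         + (\<integral>\<^sup>+\<omega>\<in>{\<omega>\<in>A. enat k < \<zeta> \<omega>}. env (Suc k) \<omega> \<partial>M))"
    unfolding switched_gain_def lt ge
    by (subst nn_integral_disjoint_pair) (auto simp: at_k add.assoc)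
qed

lemma switched_gain_Suc_le:
  assumes \<zeta>: "\<zeta> \<in> T_B M X" and A: "A \<in> sets (B (enat k))"
  shows "switched_gain \<zeta> A (Suc k) \<le> switched_gain \<zeta> A k"
  unfolding switched_gain_split[OF \<zeta> A]
  by (intro add_left_mono env_step_le sets_B_subset[OF T_B_sets(1)[OF \<zeta> A]] T_B_sets(3)[OF \<zeta> A])
    auto

definition opt_time :: "nat \<Rightarrow> 'a \<Rightarrow> enat" where
  "opt_time j = hitting_time (\<lambda>i \<omega>. j \<le> i \<and> stop_at i \<omega>)"

lemma opt_time_T_B: "opt_time j \<in> T_B M X"
  unfolding T_B_def opt_time_def
  by (intro CollectI stopping_time_hitting_time[OF filtration_B] pred_intros_logic pred_stop_at) simp

lemma opt_time_ge: "enat j \<le> opt_time j \<omega>"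
proof (cases "opt_time j \<omega>")
  case (enat n)
  then have "j \<le> n"
    by (simp add: opt_time_def hitting_time_eq_enat_iff)
  with enat show ?thesis
    by simp
qed simp

lemma opt_time_eq_iff:
  assumes "j \<le> k" and "enat k \<le> opt_time j \<omega>"
  shows "opt_time j \<omega> = enat k \<longleftrightarrow> stop_at k \<omega>"
proof -
  have "\<not> (j \<le> i \<and> stop_at i \<omega>)" if "i < k" for i
  proof
    assume "j \<le> i \<and> stop_at i \<omega>"
    then have "opt_time j \<omega> \<le> enat i"
      unfolding opt_time_def hitting_time_le_enat_iff by blast
    with assms(2) have "enat k \<le> enat i"
      by (rule order_trans)
    with that show False
      by simp
  qed
  with assms(1) show ?thesis
    unfolding opt_time_def hitting_time_eq_enat_iff by blast
qed

lemma switched_gain_opt_time_Suc: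
  assumes A: "A \<in> sets (B (enat k))" and "j \<le> k"
  shows "switched_gain (opt_time j) A (Suc k) = switched_gain (opt_time j) A k"
proof -
  have "stop_at k \<omega>" if "opt_time j \<omega> = enat k" for \<omega>
    using opt_time_eq_iff[OF \<open>j \<le> k\<close>, of \<omega>] that by simp
  moreover have "\<not> stop_at k \<omega>" if "enat k < opt_time j \<omega>" for \<omega>
    using opt_time_eq_iff[OF \<open>j \<le> k\<close> less_imp_le[OF that]] that by auto
  ultimately show ?thesis
    unfolding switched_gain_split[OF opt_time_T_B A]
    by (intro arg_cong2[where f = "(+)"] refl env_step_eq sets_B_subset[OF T_B_sets(1)[OF opt_time_T_B A]]
        T_B_sets(3)[OF opt_time_T_B A])
      auto
qed

lemma T_B_measurable: "\<zeta> \<in> T_B M X \<Longrightarrow> \<zeta> \<in> borel_measurable M"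
  by (rule measurable_stopping_time[of B]) (auto simp: T_B_def sets_B_subset)

lemma set_nn_integral_space: "(\<integral>\<^sup>+\<omega>\<in>space M. f \<omega> \<partial>M) = (\<integral>\<^sup>+\<omega>. f \<omega> \<partial>M)"
  by (intro nn_integral_cong) simp

lemma set_nn_integral_Z_stopped_SUP:
  assumes \<zeta>: "\<zeta> \<in> T_B M X" and [measurable]: "A \<in> sets M"
  shows "(\<integral>\<^sup>+\<omega>\<in>A. Z_stopped \<zeta> \<omega> \<partial>M) = (SUP k. \<integral>\<^sup>+\<omega>\<in>{\<omega>\<in>A. \<zeta> \<omega> < enat k}. Z_stopped \<zeta> \<omega> \<partial>M)"
proof -
  note [measurable] = T_B_measurable[OF \<zeta>] Z_stopped_measurable[OF \<zeta>]
  have "Z_stopped \<zeta> \<omega> * indicator A \<omega> = (SUP k. Z_stopped \<zeta> \<omega> * indicator {\<omega>\<in>A. \<zeta> \<omega> < enat k} \<omega>)"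
    for \<omega>
  proof (rule antisym)
    show "(SUP k. Z_stopped \<zeta> \<omega> * indicator {\<omega>\<in>A. \<zeta> \<omega> < enat k} \<omega>) \<le> Z_stopped \<zeta> \<omega> * indicator A \<omega>"
      by (intro SUP_least mult_left_mono) (auto split: split_indicator)
    show "Z_stopped \<zeta> \<omega> * indicator A \<omega> \<le> (SUP k. Z_stopped \<zeta> \<omega> * indicator {\<omega>\<in>A. \<zeta> \<omega> < enat k} \<omega>)"
    proof (cases "\<zeta> \<omega>")
      case (enat n)
      then show ?thesis
        by (intro SUP_upper2[of "Suc n"]) (auto split: split_indicator)
    qed (simp add: Z_stopped_def Z_stop_def)
  qed
  then have "(\<integral>\<^sup>+\<omega>\<in>A. Z_stopped \<zeta> \<omega> \<partial>M)
      = (\<integral>\<^sup>+\<omega>. (SUP k. Z_stopped \<zeta> \<omega> * indicator {\<omega>\<in>A. \<zeta> \<omega> < enat k} \<omega>) \<partial>M)"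
    by simp
  also have "\<dots> = (SUP k. \<integral>\<^sup>+\<omega>\<in>{\<omega>\<in>A. \<zeta> \<omega> < enat k}. Z_stopped \<zeta> \<omega> \<partial>M)"
    by (intro nn_integral_monotone_convergence_SUP incseq_SucI le_funI mult_left_mono)
       (auto split: split_indicator simp: enat_less_Suc_iff)
  finally show ?thesis .
qed

lemma switched_gain_start:
  assumes "\<And>\<omega>. \<omega> \<in> A \<Longrightarrow> enat j \<le> \<zeta> \<omega>"
  shows "switched_gain \<zeta> A j = (\<integral>\<^sup>+\<omega>\<in>A. env j \<omega> \<partial>M)"
proof -
  have "{\<omega>\<in>A. \<zeta> \<omega> < enat j} = {}" "{\<omega>\<in>A. enat j \<le> \<zeta> \<omega>} = A"
    using assms by (auto simp: not_less[symmetric])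
  then show ?thesis
    by (simp add: switched_gain_def)
qed

theorem set_nn_integral_Z_stopped_le_env:
  assumes \<zeta>: "\<zeta> \<in> T_B M X" and A: "A \<in> sets (B (enat j))" and ge: "\<And>\<omega>. \<omega> \<in> A \<Longrightarrow> enat j \<le> \<zeta> \<omega>"
  shows "(\<integral>\<^sup>+\<omega>\<in>A. Z_stopped \<zeta> \<omega> \<partial>M) \<le> (\<integral>\<^sup>+\<omega>\<in>A. env j \<omega> \<partial>M)"
proof -
  note [measurable] = sets_B_subset[OF A] T_B_measurable[OF \<zeta>] Z_stopped_measurable[OF \<zeta>]
  have decreasing: "switched_gain \<zeta> A (j + d) \<le> switched_gain \<zeta> A j" for d
  proof (induction d)
    case (Suc d)
    have "A \<in> sets (B (enat (j + d)))"
      using A sets_B_mono[of "enat j" "enat (j + d)"] by auto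
    from switched_gain_Suc_le[OF \<zeta> this] Suc show ?case
      by simp
  qed simp
  have "(\<integral>\<^sup>+\<omega>\<in>{\<omega>\<in>A. \<zeta> \<omega> < enat k}. Z_stopped \<zeta> \<omega> \<partial>M) \<le> (\<integral>\<^sup>+\<omega>\<in>A. env j \<omega> \<partial>M)" for k
  proof -
    have "\<zeta> \<omega> < enat k \<Longrightarrow> \<zeta> \<omega> < enat (j + k)" for \<omega>
      by (erule less_le_trans) simp
    then have "(\<integral>\<^sup>+\<omega>\<in>{\<omega>\<in>A. \<zeta> \<omega> < enat k}. Z_stopped \<zeta> \<omega> \<partial>M)
        \<le> (\<integral>\<^sup>+\<omega>\<in>{\<omega>\<in>A. \<zeta> \<omega> < enat (j + k)}. Z_stopped \<zeta> \<omega> \<partial>M)"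
      by (intro nn_integral_mono mult_left_mono) (auto split: split_indicator)
    also have "\<dots> \<le> switched_gain \<zeta> A (j + k)"
      unfolding switched_gain_def by simp
    also have "\<dots> \<le> switched_gain \<zeta> A j"
      by (rule decreasing)
    finally show ?thesis
      by (simp add: switched_gain_start ge)
  qed
  then show ?thesis
    unfolding set_nn_integral_Z_stopped_SUP[OF \<zeta> sets_B_subset[OF A]] by (rule SUP_least)
qed

theorem set_nn_integral_opt_time:
  assumes A: "A \<in> sets (B (enat j))"
  shows "(\<integral>\<^sup>+\<omega>\<in>A. Z_stopped (opt_time j) \<omega> \<partial>M) = (\<integral>\<^sup>+\<omega>\<in>A. env j \<omega> \<partial>M)"
proof (rule antisym)
  show "(\<integral>\<^sup>+\<omega>\<in>A. Z_stopped (opt_time j) \<omega> \<partial>M) \<le> (\<integral>\<^sup>+\<omega>\<in>A. env j \<omega> \<partial>M)"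
    by (rule set_nn_integral_Z_stopped_le_env[OF opt_time_T_B A opt_time_ge])
  note [measurable] = sets_B_subset[OF A] T_B_measurable[OF opt_time_T_B]
    Z_stopped_measurable[OF opt_time_T_B]
  have stationary: "switched_gain (opt_time j) A (d + j) = (\<integral>\<^sup>+\<omega>\<in>A. env j \<omega> \<partial>M)" for d
  proof (induction d)
    case 0
    show ?case
      by (simp add: switched_gain_start opt_time_ge)
  next
    case (Suc d)
    have "A \<in> sets (B (enat (d + j)))"
      using A sets_B_mono[of "enat j" "enat (d + j)"] by auto
    from switched_gain_opt_time_Suc[OF this] Suc show ?case
      by simp
  qed
  have bound: "switched_gain (opt_time j) A k \<le> (\<integral>\<^sup>+\<omega>\<in>A. Z_stopped (opt_time j) \<omega> \<partial>M) + val k" for k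
    unfolding switched_gain_def nn_integral_env[of k, symmetric]
    by (intro add_mono nn_integral_mono) (auto split: split_indicator)
  have "(\<lambda>d. (\<integral>\<^sup>+\<omega>\<in>A. Z_stopped (opt_time j) \<omega> \<partial>M) + val (d + j))
      \<longlonglongrightarrow> (\<integral>\<^sup>+\<omega>\<in>A. Z_stopped (opt_time j) \<omega> \<partial>M) + 0"
    by (intro tendsto_add tendsto_const LIMSEQ_ignore_initial_segment val_tendsto_0)
  then have "(\<lambda>d. (\<integral>\<^sup>+\<omega>\<in>A. Z_stopped (opt_time j) \<omega> \<partial>M) + val (d + j))
      \<longlonglongrightarrow> (\<integral>\<^sup>+\<omega>\<in>A. Z_stopped (opt_time j) \<omega> \<partial>M)"
    by simp
  then show "(\<integral>\<^sup>+\<omega>\<in>A. env j \<omega> \<partial>M) \<le> (\<integral>\<^sup>+\<omega>\<in>A. Z_stopped (opt_time j) \<omega> \<partial>M)"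
  proof (rule LIMSEQ_le_const)
    show "\<exists>N. \<forall>d\<ge>N. (\<integral>\<^sup>+\<omega>\<in>A. env j \<omega> \<partial>M)
        \<le> (\<integral>\<^sup>+\<omega>\<in>A. Z_stopped (opt_time j) \<omega> \<partial>M) + val (d + j)"
      using stationary bound by metis
  qed
qed

lemma nn_integral_Z_stopped_le_val: "\<zeta> \<in> T_B M X \<Longrightarrow> (\<integral>\<^sup>+\<omega>. Z_stopped \<zeta> \<omega> \<partial>M) \<le> val 0"
  using set_nn_integral_Z_stopped_le_env[of \<zeta> "space M" 0] sets.top[of "B (enat 0)"]
  by (simp add: set_nn_integral_space nn_integral_env zero_enat_def[symmetric])

lemma nn_integral_opt_time: "(\<integral>\<^sup>+\<omega>. Z_stopped (opt_time 0) \<omega> \<partial>M) = val 0"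
  using set_nn_integral_opt_time[of "space M" 0] sets.top[of "B (enat 0)"]
  by (simp add: set_nn_integral_space nn_integral_env)

theorem V_Z_eq_val: "V_Z M X H = val 0"
  unfolding V_Z_def Z_stopped_def[symmetric]
proof (rule antisym)
  show "(SUP \<zeta>\<in>T_B M X. \<integral>\<^sup>+\<omega>. Z_stopped \<zeta> \<omega> \<partial>M) \<le> val 0"
    by (intro SUP_least nn_integral_Z_stopped_le_val)
  show "val 0 \<le> (SUP \<zeta>\<in>T_B M X. \<integral>\<^sup>+\<omega>. Z_stopped \<zeta> \<omega> \<partial>M)"
    by (rule SUP_upper2[OF opt_time_T_B[of 0]]) (simp add: nn_integral_opt_time)
qed

section \<open>Reduction of the random horizon\<close>

lemma Y_stop_min_H_Suc: "Y_stop X H (\<lambda>\<omega>. min (\<zeta> \<omega>) (enat (H \<omega> + 1))) \<omega> = Y_stop X H \<zeta> \<omega>"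
  by (cases "\<zeta> \<omega>") (auto simp: Y_stop_def min_def)

lemma Y_stop_cong:
  assumes "\<And>k. k \<le> H \<omega> \<Longrightarrow> \<tau> \<omega> = enat k \<longleftrightarrow> \<zeta> \<omega> = enat k"
  shows "Y_stop X H \<tau> \<omega> = Y_stop X H \<zeta> \<omega>"
  using assms by (cases "\<tau> \<omega>"; cases "\<zeta> \<omega>") (auto simp: Y_stop_def)

text \<open>Stopping \<open>Y\<close> by a \<open>B\<close>-stopping time pays \<open>X\<^sub>i\<close> on \<open>{\<zeta> = i} \<inter> {i \<le> H}\<close>, and the event
  \<open>{i \<le> H}\<close> is independent of \<open>B\<^sub>i\<close>: this is where the discount factor \<open>S(i)\<close> comes from.\<close>

theorem nn_integral_Y_stop:
  assumes \<zeta>: "\<zeta> \<in> T_B M X"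
  shows "(\<integral>\<^sup>+\<omega>. ennreal (Y_stop X H \<zeta> \<omega>) \<partial>M) = (\<integral>\<^sup>+\<omega>. Z_stopped \<zeta> \<omega> \<partial>M)"
proof -
  define E where "E i = {\<omega>\<in>space M. \<zeta> \<omega> = enat i}" for i
  have E_B: "E i \<in> sets (B (enat i))" for i
    unfolding E_def using T_B_sets(1)[OF \<zeta> sets.top[of "B (enat i)"]] by simp
  note [measurable] = sets_B_subset[OF E_B]
  have XB: "(\<lambda>\<omega>. ennreal (X i \<omega>) * indicator (E i) \<omega>) \<in> borel_measurable (B (enat i))" for i
    using X_measurable_B[of i "enat i"] E_B[of i] by measurable
  have "ennreal (Y_stop X H \<zeta> \<omega>)
      = (\<Sum>i. ennreal (X i \<omega>) * indicator (E i) \<omega> * indicator {\<omega>\<in>space M. i \<le> H \<omega>} \<omega>)"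
    if "\<omega> \<in> space M" for \<omega>
  proof -
    have "ennreal (Y_stop X H \<zeta> \<omega>)
        = (case \<zeta> \<omega> of enat i \<Rightarrow> ennreal (X i \<omega>) * indicator {\<omega>\<in>space M. i \<le> H \<omega>} \<omega> | \<infinity> \<Rightarrow> 0)"
      using that by (cases "\<zeta> \<omega>") (simp_all add: Y_stop_def)
    then show ?thesis
      using that by (simp add: case_enat_eq_suminf E_def indicator_def mult_ac)
  qed
  then have "(\<integral>\<^sup>+\<omega>. ennreal (Y_stop X H \<zeta> \<omega>) \<partial>M)
      = (\<Sum>i. \<integral>\<^sup>+\<omega>\<in>{\<omega>\<in>space M. i \<le> H \<omega>}. ennreal (X i \<omega>) * indicator (E i) \<omega> \<partial>M)"
    by (simp add: nn_integral_suminf[symmetric] cong: nn_integral_cong)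
  also have "\<dots> = (\<Sum>i. (\<integral>\<^sup>+\<omega>. ennreal (X i \<omega>) * indicator (E i) \<omega> \<partial>M) * Surv M H i)"
    by (simp only: set_nn_integral_indep_horizon[OF XB])
  also have "\<dots> = (\<Sum>i. \<integral>\<^sup>+\<omega>. Z i \<omega> * indicator (E i) \<omega> \<partial>M)"
  proof (rule suminf_cong)
    fix i
    have "(\<integral>\<^sup>+\<omega>. Z i \<omega> * indicator (E i) \<omega> \<partial>M)
        = (\<integral>\<^sup>+\<omega>. ennreal (Surv M H i) * (ennreal (X i \<omega>) * indicator (E i) \<omega>) \<partial>M)"
      by (intro nn_integral_cong) (simp add: Z_eq mult.assoc)
    also have "\<dots> = ennreal (Surv M H i) * (\<integral>\<^sup>+\<omega>. ennreal (X i \<omega>) * indicator (E i) \<omega> \<partial>M)"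
      by (rule nn_integral_cmult) measurable
    finally show "(\<integral>\<^sup>+\<omega>. ennreal (X i \<omega>) * indicator (E i) \<omega> \<partial>M) * Surv M H i
        = (\<integral>\<^sup>+\<omega>. Z i \<omega> * indicator (E i) \<omega> \<partial>M)"
      by (simp add: mult.commute)
  qed
  also have "\<dots> = (\<integral>\<^sup>+\<omega>. (\<Sum>i. Z i \<omega> * indicator (E i) \<omega>) \<partial>M)"
    by (rule nn_integral_suminf[symmetric]) measurable
  also have "\<dots> = (\<integral>\<^sup>+\<omega>. Z_stopped \<zeta> \<omega> \<partial>M)"
    by (intro nn_integral_cong) (simp add: Z_stopped_eq_suminf E_def)
  finally show ?thesis .
qed

text \<open>Before the horizon is reached, \<open>F\<^sub>i\<close> carries no more information than \<open>B\<^sub>i\<close>.\<close>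

lemma F_sets_trace:
  assumes "A \<in> sets (F (enat i))"
  shows "\<exists>A'\<in>sets (B (enat i)). A \<inter> {\<omega>\<in>space M. i \<le> H \<omega>} = A' \<inter> {\<omega>\<in>space M. i \<le> H \<omega>}"
proof -
  have "A \<in> sigma_sets (space M) (B_gen (enat i) \<union> {{\<omega>\<in>space M. H \<omega> = j - 1} | j. 1 \<le> j \<and> enat j \<le> enat i})"
    using assms unfolding sets_F F_gen_def .
  then show ?thesis
    unfolding sets_B by (rule sigma_sets_Int_eq_generated) auto
qed

lemma T_star_agrees_with_T_B:
  assumes \<tau>: "\<tau> \<in> T_star M X H"
  shows "\<exists>\<zeta>\<in>T_B M X. \<forall>\<omega>\<in>space M. \<forall>k\<le>H \<omega>. \<tau> \<omega> = enat k \<longleftrightarrow> \<zeta> \<omega> = enat k"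
proof -
  define S where "S i = {\<omega>\<in>space M. i \<le> H \<omega>}" for i
  have "{\<omega>\<in>space M. \<tau> \<omega> = enat i} \<in> sets (F (enat i))" for i
    using filtration.stopping_time_eq_const[OF filtration_F, of \<tau> "enat i"] \<tau>
    by (simp add: T_star_def pred_def)
  then have "\<forall>i. \<exists>C\<in>sets (B (enat i)). {\<omega>\<in>space M. \<tau> \<omega> = enat i} \<inter> S i = C \<inter> S i"
    unfolding S_def by (blast intro: F_sets_trace)
  then obtain C where C_B: "\<And>i. C i \<in> sets (B (enat i))"
    and C: "\<And>i. {\<omega>\<in>space M. \<tau> \<omega> = enat i} \<inter> S i = C i \<inter> S i"
    by metis
  define \<zeta> where "\<zeta> = hitting_time (\<lambda>i \<omega>. \<omega> \<in> C i)"
  have "Measurable.pred (B (enat i)) (\<lambda>\<omega>. \<omega> \<in> C i)" for i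
  proof -
    have "{\<omega>\<in>space (B (enat i)). \<omega> \<in> C i} = C i"
      using sets.sets_into_space[OF C_B[of i]] by auto
    with C_B[of i] show ?thesis
      by (simp add: pred_def)
  qed
  then have "\<zeta> \<in> T_B M X"
    unfolding T_B_def \<zeta>_def by (intro CollectI stopping_time_hitting_time[OF filtration_B])
  moreover have "\<tau> \<omega> = enat k \<longleftrightarrow> \<zeta> \<omega> = enat k" if "\<omega> \<in> space M" "k \<le> H \<omega>" for \<omega> k
  proof -
    have "\<omega> \<in> S i" if "i \<le> k" for i
      using \<open>\<omega> \<in> space M\<close> \<open>k \<le> H \<omega>\<close> that by (simp add: S_def)
    then have iff: "\<tau> \<omega> = enat i \<longleftrightarrow> \<omega> \<in> C i" if "i \<le> k" for i
      using C[of i] \<open>\<omega> \<in> space M\<close> that by blast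
    show ?thesis
      unfolding \<zeta>_def hitting_time_eq_enat_iff
    proof
      assume k: "\<tau> \<omega> = enat k"
      have "\<omega> \<notin> C i" if "i < k" for i
        using iff[of i] that k by auto
      with k iff[of k] show "\<omega> \<in> C k \<and> (\<forall>i<k. \<omega> \<notin> C i)"
        by simp
    qed (use iff in simp)
  qed
  ultimately show ?thesis
    by blast
qed

theorem nn_integral_Y_stop_le_val:
  assumes "\<tau> \<in> T_star M X H"
  shows "(\<integral>\<^sup>+\<omega>. ennreal (Y_stop X H \<tau> \<omega>) \<partial>M) \<le> val 0"
proof -
  obtain \<zeta> where \<zeta>: "\<zeta> \<in> T_B M X" and agree: "\<forall>\<omega>\<in>space M. \<forall>k\<le>H \<omega>. \<tau> \<omega> = enat k \<longleftrightarrow> \<zeta> \<omega> = enat k"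
    using T_star_agrees_with_T_B[OF assms] by blast
  have "(\<integral>\<^sup>+\<omega>. ennreal (Y_stop X H \<tau> \<omega>) \<partial>M) = (\<integral>\<^sup>+\<omega>. ennreal (Y_stop X H \<zeta> \<omega>) \<partial>M)"
    using agree by (intro nn_integral_cong arg_cong[where f = ennreal] Y_stop_cong) auto
  also have "\<dots> = (\<integral>\<^sup>+\<omega>. Z_stopped \<zeta> \<omega> \<partial>M)"
    by (rule nn_integral_Y_stop[OF \<zeta>])
  also have "\<dots> \<le> val 0"
    by (rule nn_integral_Z_stopped_le_val[OF \<zeta>])
  finally show ?thesis .
qed

lemma nn_integral_Y_stop_min_H_Suc:
  "\<zeta> \<in> T_B M X \<Longrightarrow> (\<integral>\<^sup>+\<omega>. ennreal (Y_stop X H (\<lambda>\<omega>'. min (\<zeta> \<omega>') (enat (H \<omega>' + 1))) \<omega>) \<partial>M)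
    = (\<integral>\<^sup>+\<omega>. Z_stopped \<zeta> \<omega> \<partial>M)"
  by (simp only: Y_stop_min_H_Suc nn_integral_Y_stop)

theorem V_Y_eq_val: "V_Y M X H = val 0"
  unfolding V_Y_def
proof (rule antisym)
  show "(SUP \<tau>\<in>T_star M X H. \<integral>\<^sup>+\<omega>. ennreal (Y_stop X H \<tau> \<omega>) \<partial>M) \<le> val 0"
    by (intro SUP_least nn_integral_Y_stop_le_val)
  show "val 0 \<le> (SUP \<tau>\<in>T_star M X H. \<integral>\<^sup>+\<omega>. ennreal (Y_stop X H \<tau> \<omega>) \<partial>M)"
    by (rule SUP_upper2[OF min_H_Suc_T_star[OF opt_time_T_B[of 0]]])
       (simp only: nn_integral_Y_stop_min_H_Suc[OF opt_time_T_B] nn_integral_opt_time order_refl)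
qed

lemma optimal_stopping_time:
  assumes \<zeta>: "\<zeta> \<in> T_B M X" and opt: "(\<integral>\<^sup>+\<omega>. Z_stopped \<zeta> \<omega> \<partial>M) = val 0"
  shows "\<zeta> \<in> T_B M X \<and> (\<integral>\<^sup>+ \<omega>. ennreal (Z_stop M X H \<zeta> \<omega>) \<partial>M) = V_Z M X H
    \<and> (\<lambda>\<omega>. min (\<zeta> \<omega>) (enat (H \<omega> + 1))) \<in> T_star M X H
    \<and> (\<integral>\<^sup>+ \<omega>. ennreal (Y_stop X H (\<lambda>\<omega>'. min (\<zeta> \<omega>') (enat (H \<omega>' + 1))) \<omega>) \<partial>M) = V_Y M X H"
  using \<zeta> opt min_H_Suc_T_star[OF \<zeta>] nn_integral_Y_stop_min_H_Suc[OF \<zeta>]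
  by (simp add: V_Z_eq_val V_Y_eq_val Z_stopped_def)


section \<open>Backward induction and the Snell rule\<close>

lemma Surv_eq_0_beyond_support:
  assumes m: "supp_sup M H = enat m" and "m < k"
  shows "Surv M H k = 0"
proof -
  have "{\<omega>\<in>space M. H \<omega> = n} \<in> null_sets M" if "m < n" for n
  proof -
    have "\<not> 0 < measure M {\<omega>\<in>space M. H \<omega> = n}"
    proof
      assume "0 < measure M {\<omega>\<in>space M. H \<omega> = n}"
      then have "enat n \<le> supp_sup M H"
        unfolding supp_sup_def by (intro Sup_upper) auto
      with m \<open>m < n\<close> show False
        by simp
    qed
    then have "measure M {\<omega>\<in>space M. H \<omega> = n} = 0"
      using measure_nonneg[of M "{\<omega>\<in>space M. H \<omega> = n}"] by linarith
    then show ?thesis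
      by (simp add: null_sets_def emeasure_eq_measure)
  qed
  then have "(\<Union>n. {\<omega>\<in>space M. H \<omega> = n + k}) \<in> null_sets M"
    using \<open>m < k\<close> by (intro null_sets_UN) simp
  moreover have "{\<omega>\<in>space M. k \<le> H \<omega>} = (\<Union>n. {\<omega>\<in>space M. H \<omega> = n + k})"
  proof auto
    fix \<omega> assume "k \<le> H \<omega>"
    then show "\<exists>n. H \<omega> = n + k"
      by (intro exI[of _ "H \<omega> - k"]) simp
  qed
  ultimately show ?thesis
    by (simp add: Surv_def measure_def null_sets_def)
qed

lemma val_eq_0_beyond_support:
  assumes "supp_sup M H = enat m" and "m < k"
  shows "val k = 0"
  using val_le_tail_bound[of k] Surv_eq_0_beyond_support[OF assms(1)] assms(2)
  by (simp add: tail_bound_def)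

lemma stop_at_support: "supp_sup M H = enat m \<Longrightarrow> stop_at m \<omega>"
  by (simp add: stop_at_def val_eq_0_beyond_support)

lemma opt_time_0: "opt_time 0 = hitting_time stop_at"
  by (simp add: opt_time_def)

lemma nn_cond_exp_env_Suc:
  "AE \<omega> in M. nn_cond_exp M (B (enat j)) (env (Suc j)) \<omega> = val (Suc j)"
proof -
  interpret sigma_finite_subalgebra M "B (enat j)"
    by (rule sigma_finite_subalgebra_B)
  have "AE \<omega> in M. val (Suc j) = nn_cond_exp M (B (enat j)) (env (Suc j)) \<omega>"
    by (rule nn_cond_exp_charact)
       (simp_all add: set_nn_integral_env_Suc_const[symmetric])
  then show ?thesis
    by auto
qed

lemma BI_aux_measurable [measurable]: "BI_aux M X H m k \<in> borel_measurable M"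
  by (induction k) (simp_all add: Z_seq_def)

lemma BI_aux_AE_env:
  assumes m: "supp_sup M H = enat m"
  shows "k \<le> m \<Longrightarrow> AE \<omega> in M. BI_aux M X H m k \<omega> = env (m - k) \<omega>"
proof (induction k)
  case 0
  show ?case
    using val_eq_0_beyond_support[OF m, of "Suc m"] by (simp add: env_def Z_def)
next
  case (Suc k)
  define j where "j = m - Suc k"
  have Suc_j: "m - k = Suc j"
    using Suc.prems unfolding j_def by simp
  interpret sigma_finite_subalgebra M "B (enat j)"
    by (rule sigma_finite_subalgebra_B)
  from Suc have "AE \<omega> in M. nn_cond_exp M (B (enat j)) (BI_aux M X H m k) \<omega>
      = nn_cond_exp M (B (enat j)) (env (Suc j)) \<omega>"
    by (intro nn_cond_exp_cong) (simp_all add: Suc_j)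
  with nn_cond_exp_env_Suc[of j] show ?case
    by eventually_elim (simp add: env_def Z_def j_def)
qed

lemma nn_cond_exp_BI_W:
  assumes "supp_sup M H = enat m" and "i < m"
  shows "AE \<omega> in M. nn_cond_exp M (B (enat i)) (BI_W M X H m (Suc i)) \<omega> = val (Suc i)"
proof -
  interpret sigma_finite_subalgebra M "B (enat i)"
    by (rule sigma_finite_subalgebra_B)
  have "AE \<omega> in M. BI_W M X H m (Suc i) \<omega> = env (Suc i) \<omega>"
    using BI_aux_AE_env[OF assms(1), of "m - Suc i"] assms(2) by (simp add: BI_W_def)
  then have "AE \<omega> in M. nn_cond_exp M (B (enat i)) (BI_W M X H m (Suc i)) \<omega>
      = nn_cond_exp M (B (enat i)) (env (Suc i)) \<omega>"
    by (rule nn_cond_exp_cong) (simp_all add: BI_W_def)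
  with nn_cond_exp_env_Suc[of i] show ?thesis
    by eventually_elim simp
qed

lemma BI_rule_eq_hitting_time:
  "BI_rule M X H m = hitting_time (\<lambda>i \<omega>. i = m \<or> (i < m \<and>
     ennreal (Z_seq M X H i \<omega>) \<ge> nn_cond_exp M (B (enat i)) (BI_W M X H m (Suc i)) \<omega>))"
  by (auto simp: BI_rule_def hitting_time_def fun_eq_iff)

lemma BI_rule_T_B: "BI_rule M X H m \<in> T_B M X"
  unfolding T_B_def BI_rule_eq_hitting_time
  by (intro CollectI stopping_time_hitting_time[OF filtration_B]) measurable

lemma BI_rule_AE_opt_time:
  assumes m: "supp_sup M H = enat m"
  shows "AE \<omega> in M. BI_rule M X H m \<omega> = opt_time 0 \<omega>"
proof -
  have "\<forall>i. AE \<omega> in M. i < m \<longrightarrow> nn_cond_exp M (B (enat i)) (BI_W M X H m (Suc i)) \<omega> = val (Suc i)"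
  proof
    fix i
    show "AE \<omega> in M. i < m \<longrightarrow> nn_cond_exp M (B (enat i)) (BI_W M X H m (Suc i)) \<omega> = val (Suc i)"
      using nn_cond_exp_BI_W[OF m, of i] by (cases "i < m") simp_all
  qed
  then have "AE \<omega> in M. \<forall>i<m. nn_cond_exp M (B (enat i)) (BI_W M X H m (Suc i)) \<omega> = val (Suc i)"
    by (simp add: AE_all_countable)
  then show ?thesis
  proof eventually_elim
    case (elim \<omega>)
    show ?case
      unfolding BI_rule_eq_hitting_time opt_time_0
    proof (rule hitting_time_cong_upto[of m])
      fix i assume "i \<le> m"
      then show "(i = m \<or> i < m \<and> nn_cond_exp M (B (enat i)) (BI_W M X H m (Suc i)) \<omega>
          \<le> ennreal (Z_seq M X H i \<omega>)) = stop_at i \<omega>"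
        using elim stop_at_support[OF m, of \<omega>] by (cases "i = m") (auto simp: stop_at_def Z_def)
    qed simp
  qed
qed

lemma env_AE_snell:
  assumes V: "is_snell_envelope M X H V"
  shows "AE \<omega> in M. V i \<omega> = env i \<omega>"
proof -
  interpret sigma_finite_subalgebra M "B (enat i)"
    by (rule sigma_finite_subalgebra_B)
  let ?E = "\<lambda>\<zeta>. nn_cond_exp M (B (enat i)) (Z_stopped \<zeta>)"
  have ess: "is_ess_sup M (?E ` T_B_from M X i) (V i)"
    using V unfolding is_snell_envelope_def Z_stopped_def[abs_def] by blast
  have "AE \<omega> in M. ?E \<zeta> \<omega> \<le> env i \<omega>" if "\<zeta> \<in> T_B_from M X i" for \<zeta>
  proof (rule AE_le_if_set_nn_integral_le[OF subalgebra_B])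
    have \<zeta>: "\<zeta> \<in> T_B M X" and ge: "\<And>\<omega>. \<omega> \<in> space M \<Longrightarrow> enat i \<le> \<zeta> \<omega>"
      using that by (auto simp: T_B_from_def)
    show "env i \<in> borel_measurable (B (enat i))"
      by (rule env_measurable_B) simp
    show "(\<integral>\<^sup>+\<omega>. env i \<omega> \<partial>M) \<noteq> \<infinity>"
      using val_finite[of i] by (simp add: nn_integral_env)
    fix A assume A: "A \<in> sets (B (enat i))"
    have "(\<integral>\<^sup>+\<omega>\<in>A. ?E \<zeta> \<omega> \<partial>M) = (\<integral>\<^sup>+\<omega>\<in>A. Z_stopped \<zeta> \<omega> \<partial>M)"
      using nn_cond_exp_intg[of "indicator A" "Z_stopped \<zeta>"] A Z_stopped_measurable[OF \<zeta>]
      by (simp add: mult.commute)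
    also have "\<dots> \<le> (\<integral>\<^sup>+\<omega>\<in>A. env i \<omega> \<partial>M)"
      using sets.sets_into_space[OF A] ge by (intro set_nn_integral_Z_stopped_le_env[OF \<zeta> A]) auto
    finally show "(\<integral>\<^sup>+\<omega>\<in>A. ?E \<zeta> \<omega> \<partial>M) \<le> (\<integral>\<^sup>+\<omega>\<in>A. env i \<omega> \<partial>M)" .
  qed simp
  then have le: "AE \<omega> in M. V i \<omega> \<le> env i \<omega>"
    using ess unfolding is_ess_sup_def by auto
  have "opt_time i \<in> T_B_from M X i"
    using opt_time_T_B opt_time_ge by (simp add: T_B_from_def)
  then have "AE \<omega> in M. ?E (opt_time i) \<omega> \<le> V i \<omega>"
    using ess unfolding is_ess_sup_def by auto
  moreover have "AE \<omega> in M. env i \<omega> = ?E (opt_time i) \<omega>"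
    by (rule nn_cond_exp_charact)
       (simp_all add: set_nn_integral_opt_time Z_stopped_measurable[OF opt_time_T_B] env_measurable_B)
  ultimately have "AE \<omega> in M. env i \<omega> \<le> V i \<omega>"
    by eventually_elim simp
  with le show ?thesis
    by eventually_elim simp
qed

lemma nn_cond_exp_snell:
  assumes V: "is_snell_envelope M X H V"
  shows "AE \<omega> in M. nn_cond_exp M (B (enat i)) (V (Suc i)) \<omega> = val (Suc i)"
proof -
  interpret sigma_finite_subalgebra M "B (enat i)"
    by (rule sigma_finite_subalgebra_B)
  have "V (Suc i) \<in> borel_measurable M"
    using V unfolding is_snell_envelope_def is_ess_sup_def by blast
  then have "AE \<omega> in M. nn_cond_exp M (B (enat i)) (V (Suc i)) \<omega>
      = nn_cond_exp M (B (enat i)) (env (Suc i)) \<omega>"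
    by (intro nn_cond_exp_cong env_AE_snell[OF V]) simp_all
  with nn_cond_exp_env_Suc[of i] show ?thesis
    by eventually_elim simp
qed

lemma snell_rule_eq_hitting_time:
  "snell_rule M X H V = hitting_time (\<lambda>i \<omega>.
     ennreal (Z_seq M X H i \<omega>) \<ge> nn_cond_exp M (B (enat i)) (V (Suc i)) \<omega>)"
  by (simp add: snell_rule_def hitting_time_def fun_eq_iff)

lemma snell_rule_T_B: "snell_rule M X H V \<in> T_B M X"
  unfolding T_B_def snell_rule_eq_hitting_time
  by (intro CollectI stopping_time_hitting_time[OF filtration_B]) measurable

lemma snell_rule_AE_opt_time:
  assumes V: "is_snell_envelope M X H V"
  shows "AE \<omega> in M. snell_rule M X H V \<omega> = opt_time 0 \<omega>"
proof -
  have "AE \<omega> in M. \<forall>i. nn_cond_exp M (B (enat i)) (V (Suc i)) \<omega> = val (Suc i)"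
    using nn_cond_exp_snell[OF V] by (simp add: AE_all_countable)
  then show ?thesis
  proof eventually_elim
    case (elim \<omega>)
    show ?case
      unfolding snell_rule_eq_hitting_time opt_time_0
      by (rule hitting_time_cong) (simp add: elim stop_at_def Z_def)
  qed
qed

end

theorem theorem5:
  fixes M :: "'a measure" and X :: "nat \<Rightarrow> 'a \<Rightarrow> real" and H :: "'a \<Rightarrow> nat"
  assumes "prob_space M"
    and X_meas: "\<And>i. X i \<in> borel_measurable M"
    and X0: "\<And>\<omega>. \<omega> \<in> space M \<Longrightarrow> X 0 \<omega> = 0"
    and X_nonneg: "\<And>i \<omega>. \<omega> \<in> space M \<Longrightarrow> X i \<omega> \<ge> 0"
    and X_int: "integrable M (X 1)"
    and X_id: "\<And>i. i \<ge> 1 \<Longrightarrow> distr M borel (X i) = distr M borel (X 1)"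
    and H_meas: "H \<in> measurable M (count_space UNIV)"
    and indep: "prob_space.indep_vars M (\<lambda>_. borel)
        (\<lambda>k. case k of None \<Rightarrow> (\<lambda>\<omega>. real (H \<omega>)) | Some j \<Rightarrow> X j) (insert None (Some ` {1..}))"
    and H_int: "integrable M (\<lambda>\<omega>. real (H \<omega>))"
  shows "V_Y M X H = V_Z M X H
    \<and> (\<exists>\<zeta>\<in>T_B M X. (\<integral>\<^sup>+ \<omega>. ennreal (Z_stop M X H \<zeta> \<omega>) \<partial>M) = V_Z M X H
         \<and> (\<lambda>\<omega>. min (\<zeta> \<omega>) (enat (H \<omega> + 1))) \<in> T_star M X H
         \<and> (\<integral>\<^sup>+ \<omega>. ennreal (Y_stop X H (\<lambda>\<omega>'. min (\<zeta> \<omega>') (enat (H \<omega>' + 1))) \<omega>) \<partial>M) = V_Y M X H)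
    \<and> (\<forall>m. supp_sup M H = enat m \<longrightarrow>
         (let \<zeta> = BI_rule M X H m in
           \<zeta> \<in> T_B M X \<and> (\<integral>\<^sup>+ \<omega>. ennreal (Z_stop M X H \<zeta> \<omega>) \<partial>M) = V_Z M X H
         \<and> (\<lambda>\<omega>. min (\<zeta> \<omega>) (enat (H \<omega> + 1))) \<in> T_star M X H
         \<and> (\<integral>\<^sup>+ \<omega>. ennreal (Y_stop X H (\<lambda>\<omega>'. min (\<zeta> \<omega>') (enat (H \<omega>' + 1))) \<omega>) \<partial>M) = V_Y M X H))
    \<and> (supp_sup M H = \<infinity> \<longrightarrow> (\<forall>V. is_snell_envelope M X H V \<longrightarrow>
         (let \<zeta> = snell_rule M X H V in
           \<zeta> \<in> T_B M X \<and> (\<integral>\<^sup>+ \<omega>. ennreal (Z_stop M X H \<zeta> \<omega>) \<partial>M) = V_Z M X H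
         \<and> (\<lambda>\<omega>. min (\<zeta> \<omega>) (enat (H \<omega> + 1))) \<in> T_star M X H
         \<and> (\<integral>\<^sup>+ \<omega>. ennreal (Y_stop X H (\<lambda>\<omega>'. min (\<zeta> \<omega>') (enat (H \<omega>' + 1))) \<omega>) \<partial>M) = V_Y M X H)))"
proof -
  interpret random_horizon M X H
    by (rule random_horizon.intro) (fact assms X_meas X0 X_nonneg X_int X_id H_meas indep H_int)+
  have BI: "(\<integral>\<^sup>+\<omega>. Z_stopped (BI_rule M X H m) \<omega> \<partial>M) = val 0" if "supp_sup M H = enat m" for m
    using Z_stopped_cong_AE[OF BI_rule_AE_opt_time[OF that]] nn_integral_opt_time by simp
  have snell: "(\<integral>\<^sup>+\<omega>. Z_stopped (snell_rule M X H V) \<omega> \<partial>M) = val 0" if "is_snell_envelope M X H V" for V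
    using Z_stopped_cong_AE[OF snell_rule_AE_opt_time[OF that]] nn_integral_opt_time by simp
  \<comment> \<open>The Snell rule is optimal whether or not \<open>m\<close> is finite.\<close>
  show ?thesis
    unfolding Let_def
    using optimal_stopping_time[OF opt_time_T_B nn_integral_opt_time]
      optimal_stopping_time[OF BI_rule_T_B BI] optimal_stopping_time[OF snell_rule_T_B snell]
    by (simp add: V_Y_eq_val V_Z_eq_val) blast
qed

end
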